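(* Let $n\ge 1$. Then $\mathrm{tr}^f_n\big(f(x_n)\big)=0$ in $\mathrm{QWA}^f_{n-1}(A;z)$, where $f(x_n):=\sum_{i=0}^{l} f_i^{(n)}x_n^{\,l-i}\in\mathrm{QWA}^f_n(A;z)$.
   Context: Let $\Bbbk$ be a commutative ring, $z,t\in\Bbbk^\times$, and $A$ a symmetric Frobenius superalgebra over $\Bbbk$ with even trace $\mathrm{tr}$ (so $\mathrm{tr}(ab)=(-1)^{\bar a\bar b}\mathrm{tr}(ba)$), homogeneous basis $B_A$ and dual basis $\{b^\vee\}$ with $\mathrm{tr}(b^\vee c)=\delta_{b,c}$. Tensor factors of $A^{\otimes n}$ are numbered from right to left; for $a\in A$, $a^{(i)}:=1^{\otimes(n-i)}\otimes a\otimes 1^{\otimes(i-1)}$, and $\tau_i:=1^{\otimes(n-i-1)}\otimes\big(\sum_{b\in B_A}b\otimes b^\vee\big)\otimes1^{\otimes(i-1)}$. The quantum affine wreath product algebra $\mathrm{QAWA}_n(A;z)$ is the superalgebra generated by $A^{\otimes n}$, even invertible commuting $x_1,\dots,x_n$ and even $\sigma_1,\dots,\sigma_{n-1}$, subject to: $\sigma_i\sigma_j=\sigma_j\sigma_i$ for $|i-j|>1$; $\sigma_i\sigma_{i+1}\sigma_i=\sigma_{i+1}\sigma_i\sigma_{i+1}$; $\sigma_i^2=z\tau_i\sigma_i+1$; $\sigma_i\mathbf a=s_i(\mathbf a)\sigma_i$ for $\mathbf a\in A^{\otimes n}$ ($s_i$ superpermutes factors $i,i+1$); $\sigma_ix_j=x_j\sigma_i$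 for $j\ne i,i+1$; $\sigma_ix_i\sigma_i=x_{i+1}$; $x_i\mathbf a=\mathbf a x_i$. Fix $f(w)=f_0w^l+f_1w^{l-1}+\dots+f_l\in Z(A)_{\bar 0}[w]$ ($Z(A)_{\bar0}$ the even part of the supercenter) with $f_0=1$ and $f_l=t^2$. For $l\ge1$, the quantum cyclotomic wreath product algebra $\mathrm{QWA}^f_n(A;z)$ is the quotient of $\mathrm{QAWA}_n(A;z)$ by the two-sided ideal generated by $f(x_1)=\sum_i f_i^{(1)}x_1^{l-i}$; $\mathrm{QWA}^f_0:=\Bbbk$; if $l=0$ then $\mathrm{QWA}_n^f:=0$ for $n>0$. It is known that $\mathrm{QWA}^f_n$ embeds in $\mathrm{QWA}^f_{n+1}$ via $x_i\mapsto x_i$, $\sigma_j\mapsto\sigma_j$, $\mathbf a\mapsto 1\otimes\mathbf a$, and that there is a unique $(\mathrm{QWA}^f_n,\mathrm{QWA}^f_n)$-bimodule homomorphism $\mathrm{tr}^f_{n+1}:\mathrm{QWA}^f_{n+1}\to\mathrm{QWA}^f_n$ with $\mathrm{tr}^f_{n+1}(\sigma_n)=0$ and $\mathrm{tr}^f_{n+1}(a^{(n+1)}x_{n+1}^r)=\delta_{r,0}\mathrm{tr}(a)$ for $a\in A$, $0\le r<l$. *)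

theory Defs
  imports Main "HOL-Library.Poly_Mapping"
begin

datatype 'g word = Word "'g list"

fun word_letters :: "'g word \<Rightarrow> 'g list" where
  "word_letters (Word xs) = xs"

instantiation word :: (type) monoid_add
begin
definition zero_word :: "'g word" where "zero_word = Word []"
fun plus_word :: "'g word \<Rightarrow> 'g word \<Rightarrow> 'g word" where
  "plus_word (Word xs) (Word ys) = Word (xs @ ys)"
instance
proof
  fix a b c :: "'g word"
  show "a + b + c = a + (b + c)" by (cases a; cases b; cases c) simp
  show "0 + a = a" by (cases a) (simp add: zero_word_def)
  show "a + 0 = a" by (cases a) (simp add: zero_word_def)
qed
end

text \<open>The free associative \<open>'k\<close>-algebra on the alphabet \<open>'g\<close>: finitely supported
  functions from words to coefficients, with convolution product (a ring_1 instance
  of the Poly_Mapping library).\<close>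
type_synonym ('g, 'k) freealg = "'g word \<Rightarrow>\<^sub>0 'k"

definition fgen :: "'g \<Rightarrow> ('g, 'k::ring_1) freealg" where
  "fgen g = Poly_Mapping.single (Word [g]) 1"

definition fscal :: "'k \<Rightarrow> ('g, 'k::ring_1) freealg" where
  "fscal c = Poly_Mapping.single 0 c"

definition fsub :: "('g \<Rightarrow> bool) \<Rightarrow> ('g, 'k::ring_1) freealg set" where
  "fsub P = {p. \<forall>w\<in>Poly_Mapping.keys p. \<forall>g\<in>set (word_letters w). P g}"

inductive_set ideal_gen :: "('g, 'k::ring_1) freealg set \<Rightarrow> ('g, 'k) freealg set
    \<Rightarrow> ('g, 'k) freealg set" for V R where
  gen: "r \<in> R \<Longrightarrow> r \<in> ideal_gen V R"
| zero: "0 \<in> ideal_gen V R"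
| add: "p \<in> ideal_gen V R \<Longrightarrow> q \<in> ideal_gen V R \<Longrightarrow> p + q \<in> ideal_gen V R"
| mult: "u \<in> V \<Longrightarrow> v \<in> V \<Longrightarrow> p \<in> ideal_gen V R \<Longrightarrow> u * p * v \<in> ideal_gen V R"

text \<open>\<open>A\<close> is a ring (type \<open>'a\<close>) which is a \<open>'k\<close>-algebra via \<open>sc\<close>, with even part \<open>A0\<close>,
  odd part \<open>A1\<close>, even symmetric trace \<open>tr\<close>, finite homogeneous basis \<open>B\<close> (as a
  \<open>'k\<close>-module) and dual basis \<open>dual\<close> (\<open>tr (dual b * c) = \<delta>_{b,c}\<close>).\<close>

definition sgn_par :: "'a set \<Rightarrow> 'a \<Rightarrow> 'a \<Rightarrow> 'k::ring_1" where
  "sgn_par A1 a b = (if a \<in> A1 \<and> b \<in> A1 then -1 else 1)"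

definition sym_frob_superalg ::
  "('k::comm_ring_1 \<Rightarrow> 'a::ring_1 \<Rightarrow> 'a) \<Rightarrow> 'a set \<Rightarrow> 'a set \<Rightarrow> ('a \<Rightarrow> 'k) \<Rightarrow> 'a set
     \<Rightarrow> ('a \<Rightarrow> 'a) \<Rightarrow> bool" where
  "sym_frob_superalg sc A0 A1 tr B dual \<longleftrightarrow>
     \<comment> \<open>\<open>'k\<close>-algebra structure\<close>
     (\<forall>c a b. sc c (a + b) = sc c a + sc c b) \<and>
     (\<forall>c d a. sc (c + d) a = sc c a + sc d a) \<and>
     (\<forall>c d a. sc (c * d) a = sc c (sc d a)) \<and>
     (\<forall>a. sc 1 a = a) \<and>
     (\<forall>c a b. sc c (a * b) = sc c a * b \<and> sc c (a * b) = a * sc c b) \<and>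
     \<comment> \<open>super grading\<close>
     (\<forall>i\<in>{A0, A1}. 0 \<in> i \<and> (\<forall>a\<in>i. \<forall>b\<in>i. a + b \<in> i) \<and> (\<forall>c. \<forall>a\<in>i. sc c a \<in> i)) \<and>
     (\<forall>a. \<exists>a0\<in>A0. \<exists>a1\<in>A1. a = a0 + a1) \<and> A0 \<inter> A1 = {0} \<and>
     1 \<in> A0 \<and>
     (\<forall>a\<in>A0. \<forall>b\<in>A0. a * b \<in> A0) \<and> (\<forall>a\<in>A0. \<forall>b\<in>A1. a * b \<in> A1) \<and>
     (\<forall>a\<in>A1. \<forall>b\<in>A0. a * b \<in> A1) \<and> (\<forall>a\<in>A1. \<forall>b\<in>A1. a * b \<in> A0) \<and>
     \<comment> \<open>even symmetric \<open>'k\<close>-linear trace\<close>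
     (\<forall>a b. tr (a + b) = tr a + tr b) \<and> (\<forall>c a. tr (sc c a) = c * tr a) \<and>
     (\<forall>a\<in>A1. tr a = 0) \<and>
     (\<forall>a\<in>A0 \<union> A1. \<forall>b\<in>A0 \<union> A1. tr (a * b) = sgn_par A1 a b * tr (b * a)) \<and>
     \<comment> \<open>finite homogeneous basis of the \<open>'k\<close>-module \<open>A\<close>\<close>
     finite B \<and> B \<subseteq> A0 \<union> A1 \<and>
     (\<forall>a. \<exists>c. a = (\<Sum>b\<in>B. sc (c b) b)) \<and>
     (\<forall>c. (\<Sum>b\<in>B. sc (c b) b) = 0 \<longrightarrow> (\<forall>b\<in>B. c b = 0)) \<and>
     \<comment> \<open>dual basis\<close>
     (\<forall>b\<in>B. \<forall>c\<in>B. tr (dual b * c) = (if b = c then 1 else 0))"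

definition even_supercentral :: "'a set \<Rightarrow> 'a::ring_1 \<Rightarrow> bool" where
  "even_supercentral A0 c \<longleftrightarrow> c \<in> A0 \<and> (\<forall>a. c * a = a * c)"

text \<open>Generators: \<open>E i a\<close> is \<open>a\<^sup>(\<^sup>i\<^sup>)\<close>, \<open>X i\<close> is \<open>x_i\<close>, \<open>Xi i\<close> is \<open>x_i\<^sup>-\<^sup>1\<close>, \<open>S i\<close> is \<open>\<sigma>_i\<close>.\<close>
datatype 'a qgen = E nat 'a | X nat | Xi nat | S nat

fun valid_gen :: "nat \<Rightarrow> 'a qgen \<Rightarrow> bool" where
  "valid_gen n (E i a) = (1 \<le> i \<and> i \<le> n)"
| "valid_gen n (X i) = (1 \<le> i \<and> i \<le> n)"
| "valid_gen n (Xi i) = (1 \<le> i \<and> i \<le> n)"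
| "valid_gen n (S i) = (1 \<le> i \<and> i < n)"

type_synonym ('a, 'k) qfree = "('a qgen, 'k) freealg"

text \<open>Note that level
  \<open>n - 1\<close> is literally contained in level \<open>n\<close>, which realises the embedding
  \<open>x_i \<mapsto> x_i, \<sigma>_j \<mapsto> \<sigma>_j, \<aa> \<mapsto> 1 \<otimes> \<aa>\<close> (factors are numbered from the right).\<close>
definition Vn :: "nat \<Rightarrow> ('a, 'k::ring_1) qfree set" where
  "Vn n = fsub (valid_gen n)"

definition gE :: "nat \<Rightarrow> 'a \<Rightarrow> ('a, 'k::ring_1) qfree" where "gE i a = fgen (E i a)"
definition gX :: "nat \<Rightarrow> ('a, 'k::ring_1) qfree" where "gX i = fgen (X i)"
definition gXi :: "nat \<Rightarrow> ('a, 'k::ring_1) qfree" where "gXi i = fgen (Xi i)"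
definition gS :: "nat \<Rightarrow> ('a, 'k::ring_1) qfree" where "gS i = fgen (S i)"

definition tau :: "'a set \<Rightarrow> ('a \<Rightarrow> 'a) \<Rightarrow> nat \<Rightarrow> ('a, 'k::ring_1) qfree" where
  "tau B dual i = (\<Sum>b\<in>B. gE (Suc i) b * gE i (dual b))"

definition fpoly :: "(nat \<Rightarrow> 'a) \<Rightarrow> nat \<Rightarrow> nat \<Rightarrow> ('a, 'k::ring_1) qfree" where
  "fpoly fc l i = (\<Sum>j\<le>l. gE i (fc j) * gX i ^ (l - j))"

text \<open>The subalgebra
  \<open>A\<^sup>\<otimes>\<^sup>n\<close> is presented by the maps \<open>a \<mapsto> a\<^sup>(\<^sup>i\<^sup>)\<close> being unital \<open>'k\<close>-algebra maps whose images
  supercommute for different \<open>i\<close>; the relation \<open>\<sigma>_i \<aa> = s_i(\<aa>) \<sigma>_i\<close> is imposed on these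
  algebra generators (which is equivalent, since \<open>s_i\<close> is an algebra automorphism).\<close>
definition qawa_rels ::
  "('k::comm_ring_1 \<Rightarrow> 'a::ring_1 \<Rightarrow> 'a) \<Rightarrow> 'a set \<Rightarrow> 'a set \<Rightarrow> 'a set \<Rightarrow> ('a \<Rightarrow> 'a) \<Rightarrow> 'k
     \<Rightarrow> nat \<Rightarrow> ('a, 'k) qfree set" where
  "qawa_rels sc A0 A1 B dual z n =
     {gE i (a + b) - (gE i a + gE i b) | i a b. 1 \<le> i \<and> i \<le> n}
   \<union> {gE i (sc c a) - fscal c * gE i a | i c a. 1 \<le> i \<and> i \<le> n}
   \<union> {gE i 1 - 1 | i. 1 \<le> i \<and> i \<le> n}
   \<union> {gE i a * gE i b - gE i (a * b) | i a b. 1 \<le> i \<and> i \<le> n}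
   \<union> {gE i a * gE j b - fscal (sgn_par A1 a b) * gE j b * gE i a | i j a b.
        1 \<le> i \<and> i \<le> n \<and> 1 \<le> j \<and> j \<le> n \<and> i \<noteq> j \<and> a \<in> A0 \<union> A1 \<and> b \<in> A0 \<union> A1}
   \<union> {gX i * gXi i - 1 | i. 1 \<le> i \<and> i \<le> n}
   \<union> {gXi i * gX i - 1 | i. 1 \<le> i \<and> i \<le> n}
   \<union> {gX i * gX j - gX j * gX i | i j. 1 \<le> i \<and> i \<le> n \<and> 1 \<le> j \<and> j \<le> n}
   \<union> {gX i * gE j a - gE j a * gX i | i j a. 1 \<le> i \<and> i \<le> n \<and> 1 \<le> j \<and> j \<le> n}
   \<union> {gS i * gS j - gS j * gS i | i j. 1 \<le> i \<and> i < n \<and> 1 \<le> j \<and> j < n \<and> (i + 1 < j \<or> j + 1 < i)}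
   \<union> {gS i * gS (Suc i) * gS i - gS (Suc i) * gS i * gS (Suc i) | i. 1 \<le> i \<and> Suc i < n}
   \<union> {gS i * gS i - (fscal z * tau B dual i * gS i + 1) | i. 1 \<le> i \<and> i < n}
   \<union> {gS i * gE i a - gE (Suc i) a * gS i | i a. 1 \<le> i \<and> i < n}
   \<union> {gS i * gE (Suc i) a - gE i a * gS i | i a. 1 \<le> i \<and> i < n}
   \<union> {gS i * gE j a - gE j a * gS i | i j a. 1 \<le> i \<and> i < n \<and> 1 \<le> j \<and> j \<le> n \<and> j \<noteq> i \<and> j \<noteq> Suc i}
   \<union> {gS i * gX j - gX j * gS i | i j. 1 \<le> i \<and> i < n \<and> 1 \<le> j \<and> j \<le> n \<and> j \<noteq> i \<and> j \<noteq> Suc i}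
   \<union> {gS i * gX i * gS i - gX (Suc i) | i. 1 \<le> i \<and> i < n}"

text \<open>Relations of \<open>QWA^f_n(A;z)\<close>: those of \<open>QAWA_n\<close> plus \<open>f(x_1)\<close> when \<open>n \<ge> 1\<close>
  (for \<open>n = 0\<close> this gives \<open>'k\<close>; for \<open>l = 0\<close>, \<open>n \<ge> 1\<close> it gives \<open>0\<close> since then \<open>f(x_1) = 1\<close>).\<close>
definition qwa_ideal ::
  "('k::comm_ring_1 \<Rightarrow> 'a::ring_1 \<Rightarrow> 'a) \<Rightarrow> 'a set \<Rightarrow> 'a set \<Rightarrow> 'a set \<Rightarrow> ('a \<Rightarrow> 'a) \<Rightarrow> 'k
     \<Rightarrow> (nat \<Rightarrow> 'a) \<Rightarrow> nat \<Rightarrow> nat \<Rightarrow> ('a, 'k) qfree set" where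
  "qwa_ideal sc A0 A1 B dual z fc l n =
     ideal_gen (Vn n) (qawa_rels sc A0 A1 B dual z n \<union> (if 1 \<le> n then {fpoly fc l 1} else {}))"

definition qwa_eq ::
  "('k::comm_ring_1 \<Rightarrow> 'a::ring_1 \<Rightarrow> 'a) \<Rightarrow> 'a set \<Rightarrow> 'a set \<Rightarrow> 'a set \<Rightarrow> ('a \<Rightarrow> 'a) \<Rightarrow> 'k
     \<Rightarrow> (nat \<Rightarrow> 'a) \<Rightarrow> nat \<Rightarrow> nat \<Rightarrow> ('a, 'k) qfree \<Rightarrow> ('a, 'k) qfree \<Rightarrow> bool" where
  "qwa_eq sc A0 A1 B dual z fc l n p q \<longleftrightarrow>
     p \<in> Vn n \<and> q \<in> Vn n \<and> p - q \<in> qwa_ideal sc A0 A1 B dual z fc l n"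

text \<open>\<open>T\<close> (acting on representatives) induces a \<open>(QWA^f_{n-1}, QWA^f_{n-1})\<close>-bimodule
  homomorphism \<open>QWA^f_n \<rightarrow> QWA^f_{n-1}\<close> with the defining properties of \<open>tr^f_n\<close>:
  \<open>tr^f_n(\<sigma>_{n-1}) = 0\<close> (when \<open>n \<ge> 2\<close>) and \<open>tr^f_n(a\<^sup>(\<^sup>n\<^sup>) x_n^r) = \<delta>_{r,0} tr(a)\<close> for \<open>0 \<le> r < l\<close>.\<close>
definition is_qwa_trace ::
  "('k::comm_ring_1 \<Rightarrow> 'a::ring_1 \<Rightarrow> 'a) \<Rightarrow> 'a set \<Rightarrow> 'a set \<Rightarrow> ('a \<Rightarrow> 'k) \<Rightarrow> 'a set
     \<Rightarrow> ('a \<Rightarrow> 'a) \<Rightarrow> 'k \<Rightarrow> (nat \<Rightarrow> 'a) \<Rightarrow> nat \<Rightarrow> nat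
     \<Rightarrow> (('a, 'k) qfree \<Rightarrow> ('a, 'k) qfree) \<Rightarrow> bool" where
  "is_qwa_trace sc A0 A1 tr B dual z fc l n T \<longleftrightarrow>
     (let eqn = qwa_eq sc A0 A1 B dual z fc l n;
          eqm = qwa_eq sc A0 A1 B dual z fc l (n - 1) in
       (\<forall>p\<in>Vn n. T p \<in> Vn (n - 1)) \<and>
       (\<forall>p q. eqn p q \<longrightarrow> eqm (T p) (T q)) \<and>
       (\<forall>p\<in>Vn n. \<forall>q\<in>Vn n. eqm (T (p + q)) (T p + T q)) \<and>
       (\<forall>u\<in>Vn (n - 1). \<forall>p\<in>Vn n. eqm (T (u * p)) (u * T p) \<and> eqm (T (p * u)) (T p * u)) \<and>
       (2 \<le> n \<longrightarrow> eqm (T (gS (n - 1))) 0) \<and>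
       (\<forall>a r. r < l \<longrightarrow> eqm (T (gE n a * gX n ^ r)) (if r = 0 then fscal (tr a) else 0)))"

end

theory Submission
  imports Defs
begin

(* Put \<Phi>_m(p) = \<sigma>_{n-1} \<cdots> \<sigma>_m p \<sigma>_m \<cdots> \<sigma>_{n-1}, so that \<Phi>_n(p) = p and
   \<Phi>_m(p) = \<Phi>_{m+1}(\<sigma>_m p \<sigma>_m), and call p trace-null if tr^f_n kills a^(n) p b^(n) for all
   a, b. Trace-null elements form a subspace that is closed under congruence and under
   multiplication by a^(n) and by the generators of level n - 1 other than \<sigma>_{n-1}.

   Since f(x_1) = 0, \<Phi>_1(f(x_1)) is trace-null, and \<Phi>_{m+1}(f(x_{m+1})) - \<Phi>_m(f(x_m)) is a
   combination of the \<Phi>_{m+1}(x_{m+1}^k - \<sigma>_m x_m^k \<sigma>_m) with k \<le> l. With \<sigma>_m x_m \<sigma>_m = x_{m+1}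
   and the quadratic relation, each of these becomes a sum of products of \<Phi>_{m+1}(\<sigma>_m) or of
   some \<Phi>_{m+1}(x_{m+1}^e), 1 \<le> e < k, with factors a^(n) (coming from a^(m+1), which the
   \<sigma>'s carry to position n) and generators of level m (which commute with \<sigma>_{m+1}, ...,
   \<sigma>_{n-1}). Here \<Phi>_{m+1}(\<sigma>_m) is trace-null by the braid relation and tr^f_n(\<sigma>_{n-1}) = 0,
   and \<Phi>_j(x_j^e) is trace-null for 0 < e < l by induction on e and downward induction on j,
   starting from tr^f_n(a^(n) x_n^e) = 0. Hence f(x_n) = \<Phi>_n(f(x_n)) is trace-null, so
   tr^f_n(f(x_n)) = 0. *)

lemma fscal_commute: "fscal c * p = p * (fscal c :: ('g, 'k::comm_ring_1) freealg)"
proof (rule poly_mapping_eqI)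
  fix w :: "'g word"
  have "(\<Sum>v. c when v = 0 \<and> w = u + v) = (c when u = w)" for u :: "'g word"
  proof -
    have "(\<Sum>v. c when v = 0 \<and> w = u + v) = (\<Sum>v. (c when u = w) when v = (0::'g word))"
      by (rule arg_cong[where f = Sum_any]) (auto simp: fun_eq_iff when_def)
    then show ?thesis by simp
  qed
  then show "Poly_Mapping.lookup (fscal c * p) w = Poly_Mapping.lookup (p * fscal c) w"
    by (simp add: lookup_mult fscal_def lookup_single when_mult mult_when when_when mult.commute)
qed

lemma fscal_mult_left_commute:
  "p * (fscal c * q) = fscal c * (p * q :: ('g, 'k::comm_ring_1) freealg)"
  by (metis fscal_commute mult.assoc)

lemma fscal_1 [simp]: "fscal 1 = (1 :: ('g, 'k::comm_ring_1) freealg)"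
  by (simp add: fscal_def)

lemma fscal_uminus: "fscal (- c) = - (fscal c :: ('g, 'k::comm_ring_1) freealg)"
  by (simp add: fscal_def single_uminus)

lemma word_letters_plus: "word_letters (u + v) = word_letters u @ word_letters v"
  by (cases u; cases v) simp

lemma fsub_zero [simp]: "0 \<in> fsub P"
  by (simp add: fsub_def)

lemma fsub_one [simp]: "1 \<in> fsub P"
  by (simp add: fsub_def zero_word_def)

lemma fsub_fscal [simp]: "fscal c \<in> fsub P"
  by (simp add: fsub_def fscal_def zero_word_def)

lemma fsub_fgen [simp]: "P g \<Longrightarrow> fgen g \<in> fsub P"
  by (simp add: fsub_def fgen_def)

lemma fsub_add [simp]: "p \<in> fsub P \<Longrightarrow> q \<in> fsub P \<Longrightarrow> p + q \<in> fsub P"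
  using keys_add[of p q] unfolding fsub_def by blast

lemma fsub_uminus [simp]: "p \<in> fsub P \<Longrightarrow> - p \<in> fsub P"
  by (simp add: fsub_def)

lemma fsub_diff [simp]: "p \<in> fsub P \<Longrightarrow> q \<in> fsub P \<Longrightarrow> p - q \<in> fsub P"
  using keys_diff[of p q] unfolding fsub_def by blast

lemma fsub_mult [simp]: "p \<in> fsub P \<Longrightarrow> q \<in> fsub P \<Longrightarrow> p * q \<in> fsub P"
  using keys_mult unfolding fsub_def by (fastforce simp: word_letters_plus)

lemma fsub_power [simp]: "p \<in> fsub P \<Longrightarrow> p ^ e \<in> fsub P"
  by (induction e) simp_all

lemma fsub_sum [simp]: "(\<And>x. x \<in> J \<Longrightarrow> f x \<in> fsub P) \<Longrightarrow> sum f J \<in> fsub P"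
  by (induction J rule: infinite_finite_induct) simp_all

lemma fsub_mono: "(\<And>g. P g \<Longrightarrow> Q g) \<Longrightarrow> p \<in> fsub P \<Longrightarrow> p \<in> fsub Q"
  unfolding fsub_def by blast

lemma Vn_gE [simp]: "1 \<le> i \<Longrightarrow> i \<le> k \<Longrightarrow> gE i a \<in> Vn k"
  by (simp add: Vn_def gE_def)

lemma Vn_gX [simp]: "1 \<le> i \<Longrightarrow> i \<le> k \<Longrightarrow> gX i \<in> Vn k"
  by (simp add: Vn_def gX_def)

lemma Vn_gS [simp]: "1 \<le> i \<Longrightarrow> i < k \<Longrightarrow> gS i \<in> Vn k"
  by (simp add: Vn_def gS_def)

lemma Vn_closed [simp]:
  "0 \<in> Vn k" "1 \<in> Vn k" "fscal c \<in> Vn k"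
  "p \<in> Vn k \<Longrightarrow> q \<in> Vn k \<Longrightarrow> p + q \<in> Vn k"
  "p \<in> Vn k \<Longrightarrow> q \<in> Vn k \<Longrightarrow> p - q \<in> Vn k"
  "p \<in> Vn k \<Longrightarrow> q \<in> Vn k \<Longrightarrow> p * q \<in> Vn k"
  "p \<in> Vn k \<Longrightarrow> - p \<in> Vn k"
  "p \<in> Vn k \<Longrightarrow> p ^ e \<in> Vn k"
  by (simp_all add: Vn_def)

lemma Vn_sum [simp]: "(\<And>x. x \<in> J \<Longrightarrow> f x \<in> Vn k) \<Longrightarrow> sum f J \<in> Vn k"
  by (simp add: Vn_def)

lemma Vn_prod_list: "(\<And>x. x \<in> set xs \<Longrightarrow> x \<in> Vn k) \<Longrightarrow> prod_list xs \<in> Vn k"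
  by (induction xs) simp_all

lemma Vn_tau [simp]: "1 \<le> i \<Longrightarrow> i < k \<Longrightarrow> tau B dual i \<in> Vn k"
  by (simp add: tau_def)

lemma Vn_fpoly [simp]: "1 \<le> i \<Longrightarrow> i \<le> k \<Longrightarrow> fpoly fc l i \<in> Vn k"
  by (simp add: fpoly_def)

lemma Vn_mono:
  assumes "p \<in> Vn k" and "k \<le> k'"
  shows "p \<in> Vn k'"
proof -
  have "valid_gen k g \<Longrightarrow> valid_gen k' g" for g :: "'a qgen"
    using \<open>k \<le> k'\<close> by (cases g) auto
  then show ?thesis
    using assms(1) unfolding Vn_def by (rule fsub_mono)
qed

lemma ideal_gen_mult_left: "u \<in> V \<Longrightarrow> 1 \<in> V \<Longrightarrow> p \<in> ideal_gen V R \<Longrightarrow> u * p \<in> ideal_gen V R"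
  using ideal_gen.mult[of u V 1 p R] by simp

lemma ideal_gen_mult_right: "v \<in> V \<Longrightarrow> 1 \<in> V \<Longrightarrow> p \<in> ideal_gen V R \<Longrightarrow> p * v \<in> ideal_gen V R"
  using ideal_gen.mult[of 1 V v p R] by simp

section \<open>Congruence modulo the defining ideal\<close>

locale qwa_presentation =
  fixes sc :: "'k::comm_ring_1 \<Rightarrow> 'a::ring_1 \<Rightarrow> 'a" and A0 A1 B :: "'a set"
    and dual :: "'a \<Rightarrow> 'a" and z :: 'k and fc :: "nat \<Rightarrow> 'a" and l :: nat
begin

abbreviation qideal :: "nat \<Rightarrow> ('a, 'k) qfree set" where
  "qideal k \<equiv> qwa_ideal sc A0 A1 B dual z fc l k"

abbreviation qeq :: "nat \<Rightarrow> ('a, 'k) qfree \<Rightarrow> ('a, 'k) qfree \<Rightarrow> bool" where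
  "qeq k \<equiv> qwa_eq sc A0 A1 B dual z fc l k"

lemma qideal_add: "p \<in> qideal k \<Longrightarrow> q \<in> qideal k \<Longrightarrow> p + q \<in> qideal k"
  unfolding qwa_ideal_def by (rule ideal_gen.add)

lemma qideal_mult_left: "u \<in> Vn k \<Longrightarrow> p \<in> qideal k \<Longrightarrow> u * p \<in> qideal k"
  unfolding qwa_ideal_def by (rule ideal_gen_mult_left) simp_all

lemma qideal_mult_right: "v \<in> Vn k \<Longrightarrow> p \<in> qideal k \<Longrightarrow> p * v \<in> qideal k"
  unfolding qwa_ideal_def by (rule ideal_gen_mult_right) simp_all

lemma qideal_uminus: "p \<in> qideal k \<Longrightarrow> - p \<in> qideal k"
  using qideal_mult_left[of "- 1" k p] by simp

lemma qeq_refl: "p \<in> Vn k \<Longrightarrow> qeq k p p"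
  by (simp add: qwa_eq_def qwa_ideal_def ideal_gen.zero)

lemma qeq_sym: "qeq k p q \<Longrightarrow> qeq k q p"
  using qideal_uminus[of "p - q" k] by (simp add: qwa_eq_def)

lemma qeq_trans [trans]: "qeq k p q \<Longrightarrow> qeq k q r \<Longrightarrow> qeq k p r"
  using qideal_add[of "p - q" k "q - r"] by (simp add: qwa_eq_def)

lemma qeq_carrier: "qeq k p q \<Longrightarrow> p \<in> Vn k" "qeq k p q \<Longrightarrow> q \<in> Vn k"
  by (simp_all add: qwa_eq_def)

lemma qeq_add: "qeq k p p' \<Longrightarrow> qeq k q q' \<Longrightarrow> qeq k (p + q) (p' + q')"
  using qideal_add[of "p - p'" k "q - q'"] by (simp add: qwa_eq_def algebra_simps)

lemma qeq_uminus: "qeq k p p' \<Longrightarrow> qeq k (- p) (- p')"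
  using qideal_uminus[of "p - p'" k] by (simp add: qwa_eq_def)

lemma qeq_diff: "qeq k p p' \<Longrightarrow> qeq k q q' \<Longrightarrow> qeq k (p - q) (p' - q')"
  using qeq_add[of k p p' "- q" "- q'"] qeq_uminus[of k q q'] by simp

lemma qeq_mult:
  assumes "qeq k p p'" and "qeq k q q'"
  shows "qeq k (p * q) (p' * q')"
proof -
  have "p * q - p' * q' = (p - p') * q + p' * (q - q')"
    by (simp add: algebra_simps)
  moreover have "(p - p') * q \<in> qideal k" "p' * (q - q') \<in> qideal k"
    using assms by (simp_all add: qwa_eq_def qideal_mult_left qideal_mult_right)
  ultimately show ?thesis
    using assms qideal_add by (simp add: qwa_eq_def)
qed

lemma qeq_mult_left: "u \<in> Vn k \<Longrightarrow> qeq k q q' \<Longrightarrow> qeq k (u * q) (u * q')"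
  by (rule qeq_mult[OF qeq_refl])

lemma qeq_mult_right: "v \<in> Vn k \<Longrightarrow> qeq k q q' \<Longrightarrow> qeq k (q * v) (q' * v)"
  by (rule qeq_mult[OF _ qeq_refl])

lemma qeq_sandwich: "qeq k p q \<Longrightarrow> u \<in> Vn k \<Longrightarrow> v \<in> Vn k \<Longrightarrow> qeq k (u * p * v) (u * q * v)"
  by (intro qeq_mult_left qeq_mult_right)

lemma qeq_add_right: "v \<in> Vn k \<Longrightarrow> qeq k q q' \<Longrightarrow> qeq k (q + v) (q' + v)"
  by (rule qeq_add[OF _ qeq_refl])

lemma qeq_sum: "(\<And>x. x \<in> J \<Longrightarrow> qeq k (f x) (g x)) \<Longrightarrow> qeq k (sum f J) (sum g J)"
  by (induction J rule: infinite_finite_induct) (simp_all add: qeq_refl qeq_add)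

lemma qeq_relI: "p - q \<in> qawa_rels sc A0 A1 B dual z k \<Longrightarrow> p \<in> Vn k \<Longrightarrow> q \<in> Vn k \<Longrightarrow> qeq k p q"
  by (simp add: qwa_eq_def qwa_ideal_def ideal_gen.gen)

lemma qeq_zeroI: "p \<in> Vn k \<Longrightarrow> p \<in> qideal k \<Longrightarrow> qeq k p 0"
  by (simp add: qwa_eq_def)

(* In the proofs of the relations below, intro UnI1 UnI2 enumerates (by backtracking) the
   summands of the union qawa_rels, and blast picks the matching one. *)

lemma qeq_E_add: "1 \<le> i \<Longrightarrow> i \<le> k \<Longrightarrow> qeq k (gE i (a + b)) (gE i a + gE i b)"
  by (rule qeq_relI, unfold qawa_rels_def, intro UnI1 UnI2, blast) simp_all

lemma qeq_E_one: "1 \<le> i \<Longrightarrow> i \<le> k \<Longrightarrow> qeq k (gE i 1) 1"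
  by (rule qeq_relI, unfold qawa_rels_def, intro UnI1 UnI2, blast) simp_all

lemma qeq_E_mult: "1 \<le> i \<Longrightarrow> i \<le> k \<Longrightarrow> qeq k (gE i a * gE i b) (gE i (a * b))"
  by (rule qeq_relI, unfold qawa_rels_def, intro UnI1 UnI2, blast) simp_all

lemma qeq_E_supercommute:
  "1 \<le> i \<Longrightarrow> i \<le> k \<Longrightarrow> 1 \<le> j \<Longrightarrow> j \<le> k \<Longrightarrow> i \<noteq> j \<Longrightarrow> a \<in> A0 \<union> A1 \<Longrightarrow> b \<in> A0 \<union> A1 \<Longrightarrow>
    qeq k (gE i a * gE j b) (fscal (sgn_par A1 a b) * gE j b * gE i a)"
  by (rule qeq_relI, unfold qawa_rels_def, intro UnI1 UnI2, blast) simp_all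

lemma qeq_X_commute:
  "1 \<le> i \<Longrightarrow> i \<le> k \<Longrightarrow> 1 \<le> j \<Longrightarrow> j \<le> k \<Longrightarrow> qeq k (gX i * gX j) (gX j * gX i)"
  by (rule qeq_relI, unfold qawa_rels_def, intro UnI1 UnI2, blast) simp_all

lemma qeq_X_E_commute:
  "1 \<le> i \<Longrightarrow> i \<le> k \<Longrightarrow> 1 \<le> j \<Longrightarrow> j \<le> k \<Longrightarrow> qeq k (gX i * gE j a) (gE j a * gX i)"
  by (rule qeq_relI, unfold qawa_rels_def, intro UnI1 UnI2, blast) simp_all

lemma qeq_S_commute:
  "1 \<le> i \<Longrightarrow> i < k \<Longrightarrow> 1 \<le> j \<Longrightarrow> j < k \<Longrightarrow> i + 1 < j \<or> j + 1 < i \<Longrightarrow>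
    qeq k (gS i * gS j) (gS j * gS i)"
  by (rule qeq_relI, unfold qawa_rels_def, intro UnI1 UnI2, blast) simp_all

lemma qeq_S_braid:
  "1 \<le> i \<Longrightarrow> Suc i < k \<Longrightarrow>
    qeq k (gS i * gS (Suc i) * gS i) (gS (Suc i) * gS i * gS (Suc i))"
  by (rule qeq_relI, unfold qawa_rels_def, intro UnI1 UnI2, blast) simp_all

lemma qeq_S_square: "1 \<le> i \<Longrightarrow> i < k \<Longrightarrow> qeq k (gS i * gS i) (fscal z * tau B dual i * gS i + 1)"
  by (rule qeq_relI, unfold qawa_rels_def, intro UnI1 UnI2, blast) simp_all

lemma qeq_S_E_up: "1 \<le> i \<Longrightarrow> i < k \<Longrightarrow> qeq k (gS i * gE i a) (gE (Suc i) a * gS i)"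
  by (rule qeq_relI, unfold qawa_rels_def, intro UnI1 UnI2, blast) simp_all

lemma qeq_S_E_down: "1 \<le> i \<Longrightarrow> i < k \<Longrightarrow> qeq k (gS i * gE (Suc i) a) (gE i a * gS i)"
  by (rule qeq_relI, unfold qawa_rels_def, intro UnI1 UnI2, blast) simp_all

lemma qeq_S_E_commute:
  "1 \<le> i \<Longrightarrow> i < k \<Longrightarrow> 1 \<le> j \<Longrightarrow> j \<le> k \<Longrightarrow> j \<noteq> i \<Longrightarrow> j \<noteq> Suc i \<Longrightarrow>
    qeq k (gS i * gE j a) (gE j a * gS i)"
  by (rule qeq_relI, unfold qawa_rels_def, intro UnI1 UnI2, blast) simp_all

lemma qeq_S_X_commute:
  "1 \<le> i \<Longrightarrow> i < k \<Longrightarrow> 1 \<le> j \<Longrightarrow> j \<le> k \<Longrightarrow> j \<noteq> i \<Longrightarrow> j \<noteq> Suc i \<Longrightarrow>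
    qeq k (gS i * gX j) (gX j * gS i)"
  by (rule qeq_relI, unfold qawa_rels_def, intro UnI1 UnI2, blast) simp_all

lemma qeq_S_X_S: "1 \<le> i \<Longrightarrow> i < k \<Longrightarrow> qeq k (gS i * gX i * gS i) (gX (Suc i))"
  by (rule qeq_relI, unfold qawa_rels_def, intro UnI1 UnI2, blast) simp_all

definition commute_in :: "nat \<Rightarrow> ('a, 'k) qfree \<Rightarrow> ('a, 'k) qfree \<Rightarrow> bool" where
  "commute_in k g h \<longleftrightarrow> qeq k (g * h) (h * g)"

lemma commute_in_sym: "commute_in k g h \<Longrightarrow> commute_in k h g"
  unfolding commute_in_def by (rule qeq_sym)

lemma commute_in_one: "g \<in> Vn k \<Longrightarrow> commute_in k g 1"
  by (simp add: commute_in_def qeq_refl)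

lemma commute_in_fscal: "g \<in> Vn k \<Longrightarrow> commute_in k g (fscal c)"
  by (simp add: commute_in_def qeq_refl fscal_commute)

lemma commute_in_mult_right:
  assumes "g \<in> Vn k" "h1 \<in> Vn k" "h2 \<in> Vn k" "commute_in k g h1" "commute_in k g h2"
  shows "commute_in k g (h1 * h2)"
proof -
  have "qeq k (g * h1 * h2) (h1 * g * h2)"
    using assms(3,4) unfolding commute_in_def by (rule qeq_mult_right)
  also have "h1 * g * h2 = h1 * (g * h2)"
    by (simp add: mult.assoc)
  also have "qeq k \<dots> (h1 * (h2 * g))"
    using assms(2,5) unfolding commute_in_def by (rule qeq_mult_left)
  finally show ?thesis
    unfolding commute_in_def by (simp add: mult.assoc)
qed

lemma commute_in_mult_left:
  "g \<in> Vn k \<Longrightarrow> h1 \<in> Vn k \<Longrightarrow> h2 \<in> Vn k \<Longrightarrow> commute_in k h1 g \<Longrightarrow> commute_in k h2 g \<Longrightarrow>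
    commute_in k (h1 * h2) g"
  using commute_in_mult_right commute_in_sym by blast

lemma commute_in_power_right: "g \<in> Vn k \<Longrightarrow> h \<in> Vn k \<Longrightarrow> commute_in k g h \<Longrightarrow> commute_in k g (h ^ e)"
  by (induction e) (simp_all add: commute_in_one commute_in_mult_right)

lemma commute_in_power_left: "g \<in> Vn k \<Longrightarrow> h \<in> Vn k \<Longrightarrow> commute_in k g h \<Longrightarrow> commute_in k (g ^ e) h"
  using commute_in_power_right[of h k g e] commute_in_sym by blast

lemma commute_in_sum_right:
  assumes "g \<in> Vn k" "\<And>x. x \<in> J \<Longrightarrow> commute_in k g (f x)"
  shows "commute_in k g (sum f J)"
proof -
  have "qeq k (\<Sum>x\<in>J. g * f x) (\<Sum>x\<in>J. f x * g)"
    using assms(2) unfolding commute_in_def by (rule qeq_sum)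
  then show ?thesis
    unfolding commute_in_def by (simp add: sum_distrib_left sum_distrib_right)
qed

lemma commute_in_prod_list_right:
  "g \<in> Vn k \<Longrightarrow> (\<And>h. h \<in> set hs \<Longrightarrow> h \<in> Vn k \<and> commute_in k g h) \<Longrightarrow>
    commute_in k g (prod_list hs)"
  by (induction hs) (simp_all add: commute_in_one commute_in_mult_right Vn_prod_list)

lemma commute_in_X_E: "1 \<le> i \<Longrightarrow> i \<le> k \<Longrightarrow> 1 \<le> j \<Longrightarrow> j \<le> k \<Longrightarrow> commute_in k (gX i) (gE j a)"
  unfolding commute_in_def by (rule qeq_X_E_commute)

lemma commute_in_X_X: "1 \<le> i \<Longrightarrow> i \<le> k \<Longrightarrow> 1 \<le> j \<Longrightarrow> j \<le> k \<Longrightarrow> commute_in k (gX i) (gX j)"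
  unfolding commute_in_def by (rule qeq_X_commute)

lemma commute_in_S_E:
  "1 \<le> i \<Longrightarrow> i < k \<Longrightarrow> 1 \<le> j \<Longrightarrow> j \<le> k \<Longrightarrow> j \<noteq> i \<Longrightarrow> j \<noteq> Suc i \<Longrightarrow>
    commute_in k (gS i) (gE j a)"
  unfolding commute_in_def by (rule qeq_S_E_commute)

lemma commute_in_S_X:
  "1 \<le> i \<Longrightarrow> i < k \<Longrightarrow> 1 \<le> j \<Longrightarrow> j \<le> k \<Longrightarrow> j \<noteq> i \<Longrightarrow> j \<noteq> Suc i \<Longrightarrow>
    commute_in k (gS i) (gX j)"
  unfolding commute_in_def by (rule qeq_S_X_commute)

lemma commute_in_S_S:
  "1 \<le> i \<Longrightarrow> i < k \<Longrightarrow> 1 \<le> j \<Longrightarrow> j < k \<Longrightarrow> i + 1 < j \<or> j + 1 < i \<Longrightarrow>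
    commute_in k (gS i) (gS j)"
  unfolding commute_in_def by (rule qeq_S_commute)

lemma commute_in_X_tau: "1 \<le> i \<Longrightarrow> i \<le> k \<Longrightarrow> 1 \<le> m \<Longrightarrow> m < k \<Longrightarrow> commute_in k (gX i) (tau B dual m)"
  unfolding tau_def
  by (rule commute_in_sum_right) (simp_all add: commute_in_mult_right commute_in_X_E)

lemma S_X_succ:
  assumes m: "1 \<le> m" "m < k"
  shows "qeq k (gS m * gX (Suc m)) (gX m * gS m + fscal z * tau B dual m * gX (Suc m))"
proof -
  let ?s = "gS m" and ?x = "gX m" and ?t = "tau B dual m"
  have "qeq k (?s * gX (Suc m)) (?s * (?s * ?x * ?s))"
    by (rule qeq_mult_left[OF _ qeq_sym[OF qeq_S_X_S]]) (use m in simp_all)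
  also have "?s * (?s * ?x * ?s) = (?s * ?s) * (?x * ?s)"
    by (simp add: mult.assoc)
  also have "qeq k \<dots> ((fscal z * ?t * ?s + 1) * (?x * ?s))"
    by (rule qeq_mult_right[OF _ qeq_S_square]) (use m in simp_all)
  also have "(fscal z * ?t * ?s + 1) * (?x * ?s) = fscal z * ?t * (?s * ?x * ?s) + ?x * ?s"
    by (simp add: algebra_simps)
  also have "qeq k \<dots> (fscal z * ?t * gX (Suc m) + ?x * ?s)"
    by (rule qeq_add_right[OF _ qeq_mult_left[OF _ qeq_S_X_S]]) (use m in simp_all)
  finally show ?thesis
    by (simp add: add.commute)
qed

end

lemma power_mult_left_commute: "(a :: 'r::monoid_mult) ^ k * (a * b) = a * (a ^ k * b)"
  by (simp add: mult.assoc[symmetric] power_commutes)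

lemma sum_power_sandwich_Suc:
  fixes x t y :: "'r::ring_1"
  shows "(\<Sum>a<d. x ^ a * t * y ^ (d - a)) * y + x ^ d * t * y
    = (\<Sum>a<Suc d. x ^ a * t * y ^ (Suc d - a))"
proof -
  have "(\<Sum>a<d. x ^ a * t * y ^ (Suc d - a)) = (\<Sum>a<d. x ^ a * t * y ^ (d - a) * y)"
    by (rule sum.cong) (auto simp: Suc_diff_le power_commutes mult.assoc power_mult_left_commute)
  then show ?thesis
    by (simp add: sum_distrib_right)
qed

context qwa_presentation
begin

lemma S_X_succ_power:
  assumes m: "1 \<le> m" "m < k"
  shows "qeq k (gS m * gX (Suc m) ^ d)
    (gX m ^ d * gS m + fscal z * (\<Sum>a<d. gX m ^ a * tau B dual m * gX (Suc m) ^ (d - a)))"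
proof (induction d)
  case 0
  show ?case using m by (simp add: qeq_refl)
next
  case (Suc d)
  let ?s = "gS m" and ?x = "gX m" and ?y = "gX (Suc m)" and ?t = "tau B dual m"
  let ?S = "\<Sum>a<d. ?x ^ a * ?t * ?y ^ (d - a)"
  have "?s * ?y ^ Suc d = (?s * ?y ^ d) * ?y"
    by (simp add: power_commutes mult.assoc power_mult_left_commute)
  also have "qeq k \<dots> ((?x ^ d * ?s + fscal z * ?S) * ?y)"
    by (rule qeq_mult_right[OF _ Suc.IH]) (use m in simp)
  also have "(?x ^ d * ?s + fscal z * ?S) * ?y = ?x ^ d * (?s * ?y) + fscal z * (?S * ?y)"
    by (simp add: algebra_simps)
  also have "qeq k \<dots> (?x ^ d * (?x * ?s + fscal z * ?t * ?y) + fscal z * (?S * ?y))"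
    by (rule qeq_add_right[OF _ qeq_mult_left[OF _ S_X_succ[OF m]]]) (use m in simp_all)
  also have "?x ^ d * (?x * ?s + fscal z * ?t * ?y) + fscal z * (?S * ?y)
      = ?x ^ Suc d * ?s + fscal z * (?S * ?y + ?x ^ d * ?t * ?y)"
    by (simp add: algebra_simps power_mult_left_commute fscal_mult_left_commute)
  also have "?S * ?y + ?x ^ d * ?t * ?y = (\<Sum>a<Suc d. ?x ^ a * ?t * ?y ^ (Suc d - a))"
    by (rule sum_power_sandwich_Suc)
  finally show ?case .
qed

lemma X_succ_power:
  assumes m: "1 \<le> m" "m < k"
  shows "qeq k (gX (Suc m) ^ Suc d)
    (gS m * gX m ^ Suc d * gS m
      + fscal z * (\<Sum>a<d. gS m * gX m ^ Suc a * tau B dual m * gX (Suc m) ^ (d - a)))"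
proof -
  let ?s = "gS m" and ?x = "gX m" and ?y = "gX (Suc m)" and ?t = "tau B dual m"
  let ?S = "\<Sum>a<d. ?x ^ a * ?t * ?y ^ (d - a)"
  have "?y ^ Suc d = ?y * ?y ^ d"
    by simp
  also have "qeq k \<dots> ((?s * ?x * ?s) * ?y ^ d)"
    by (rule qeq_mult_right[OF _ qeq_sym[OF qeq_S_X_S]]) (use m in simp_all)
  also have "(?s * ?x * ?s) * ?y ^ d = (?s * ?x) * (?s * ?y ^ d)"
    by (simp add: mult.assoc)
  also have "qeq k \<dots> ((?s * ?x) * (?x ^ d * ?s + fscal z * ?S))"
    by (rule qeq_mult_left[OF _ S_X_succ_power[OF m]]) (use m in simp)
  also have "(?s * ?x) * (?x ^ d * ?s + fscal z * ?S)
      = ?s * ?x ^ Suc d * ?s + fscal z * (?s * ?x * ?S)"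
    by (simp add: algebra_simps fscal_mult_left_commute)
  also have "?s * ?x * ?S = (\<Sum>a<d. ?s * ?x ^ Suc a * ?t * ?y ^ (d - a))"
    by (simp add: sum_distrib_left mult.assoc)
  finally show ?thesis .
qed

lemma fpoly_conj_defect:
  assumes m: "1 \<le> m" "m < k"
  shows "qeq k (fpoly fc l (Suc m) - gS m * fpoly fc l m * gS m)
    (\<Sum>j\<le>l. gE (Suc m) (fc j) * (gX (Suc m) ^ (l - j) - gS m * gX m ^ (l - j) * gS m))"
proof -
  let ?s = "gS m" and ?x = "gX m" and ?y = "gX (Suc m)"
  have "qeq k (?s * (gE m (fc j) * ?x ^ (l - j)) * ?s)
      (gE (Suc m) (fc j) * (?s * ?x ^ (l - j) * ?s))"
    for j
  proof -
    have "?s * (gE m (fc j) * ?x ^ (l - j)) * ?s = (?s * gE m (fc j)) * (?x ^ (l - j) * ?s)"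
      by (simp add: mult.assoc)
    also have "qeq k \<dots> ((gE (Suc m) (fc j) * ?s) * (?x ^ (l - j) * ?s))"
      by (rule qeq_mult_right[OF _ qeq_S_E_up]) (use m in simp_all)
    finally show ?thesis
      by (simp add: mult.assoc)
  qed
  then have "qeq k
      (\<Sum>j\<le>l. gE (Suc m) (fc j) * ?y ^ (l - j) - ?s * (gE m (fc j) * ?x ^ (l - j)) * ?s)
      (\<Sum>j\<le>l. gE (Suc m) (fc j) * ?y ^ (l - j) - gE (Suc m) (fc j) * (?s * ?x ^ (l - j) * ?s))"
    by (intro qeq_sum qeq_diff qeq_refl) (use m in simp)
  then show ?thesis
    by (simp add: fpoly_def sum_distrib_left sum_distrib_right sum_subtractf right_diff_distrib)
qed

end

section \<open>Trace-null elements\<close>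

locale qwa_trace = qwa_presentation sc A0 A1 B dual z fc l
  for sc :: "'k::comm_ring_1 \<Rightarrow> 'a::ring_1 \<Rightarrow> 'a" and A0 A1 B dual z fc l +
  fixes tr :: "'a \<Rightarrow> 'k" and n :: nat and T :: "('a, 'k) qfree \<Rightarrow> ('a, 'k) qfree"
  assumes graded: "\<exists>a0\<in>A0. \<exists>a1\<in>A1. a = a0 + a1"
    and n_pos: "1 \<le> n"
    and trace: "is_qwa_trace sc A0 A1 tr B dual z fc l n T"
begin

abbreviation qeq_top :: "('a, 'k) qfree \<Rightarrow> ('a, 'k) qfree \<Rightarrow> bool" (infix "\<approx>" 50) where
  "p \<approx> q \<equiv> qeq n p q"

abbreviation T_vanishes :: "('a, 'k) qfree \<Rightarrow> bool" where
  "T_vanishes p \<equiv> qeq (n - 1) (T p) 0"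

lemma T_in_Vn: "p \<in> Vn n \<Longrightarrow> T p \<in> Vn (n - 1)"
  using trace unfolding is_qwa_trace_def Let_def by blast

lemma T_cong: "p \<approx> q \<Longrightarrow> qeq (n - 1) (T p) (T q)"
  using trace unfolding is_qwa_trace_def Let_def by blast

lemma T_add: "p \<in> Vn n \<Longrightarrow> q \<in> Vn n \<Longrightarrow> qeq (n - 1) (T (p + q)) (T p + T q)"
  using trace unfolding is_qwa_trace_def Let_def by blast

lemma T_mult_left: "u \<in> Vn (n - 1) \<Longrightarrow> p \<in> Vn n \<Longrightarrow> qeq (n - 1) (T (u * p)) (u * T p)"
  using trace unfolding is_qwa_trace_def Let_def by blast

lemma T_mult_right: "u \<in> Vn (n - 1) \<Longrightarrow> p \<in> Vn n \<Longrightarrow> qeq (n - 1) (T (p * u)) (T p * u)"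
  using trace unfolding is_qwa_trace_def Let_def by blast

lemma T_S_last: "2 \<le> n \<Longrightarrow> T_vanishes (gS (n - 1))"
  using trace unfolding is_qwa_trace_def Let_def by blast

lemma T_E_X_power:
  "r < l \<Longrightarrow> qeq (n - 1) (T (gE n a * gX n ^ r)) (if r = 0 then fscal (tr a) else 0)"
  using trace unfolding is_qwa_trace_def Let_def by blast

lemma T_vanishes_zero: "T_vanishes 0"
proof -
  have "qeq (n - 1) (T 0) (T 0 + T 0)"
    using T_add[of 0 0] by simp
  moreover have "qeq (n - 1) (T 0) (T 0)"
    by (rule qeq_refl, rule T_in_Vn) simp
  ultimately have "qeq (n - 1) (T 0 - T 0) (T 0 + T 0 - T 0)"
    by (rule qeq_diff)
  then show ?thesis
    by (simp add: qeq_sym)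
qed

lemma T_vanishes_qeq: "p \<approx> q \<Longrightarrow> T_vanishes q \<Longrightarrow> T_vanishes p"
  by (rule qeq_trans[OF T_cong])

lemma T_vanishes_add:
  assumes "p \<in> Vn n" "q \<in> Vn n" "T_vanishes p" "T_vanishes q"
  shows "T_vanishes (p + q)"
proof -
  have "qeq (n - 1) (T (p + q)) (T p + T q)"
    by (rule T_add[OF assms(1,2)])
  also have "qeq (n - 1) \<dots> (0 + 0)"
    by (rule qeq_add[OF assms(3,4)])
  finally show ?thesis
    by simp
qed

lemma T_vanishes_mult_left:
  assumes "u \<in> Vn (n - 1)" "p \<in> Vn n" "T_vanishes p"
  shows "T_vanishes (u * p)"
proof -
  have "qeq (n - 1) (T (u * p)) (u * T p)"
    by (rule T_mult_left[OF assms(1,2)])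
  also have "qeq (n - 1) \<dots> (u * 0)"
    by (rule qeq_mult_left[OF assms(1,3)])
  finally show ?thesis
    by simp
qed

lemma T_vanishes_mult_right:
  assumes "u \<in> Vn (n - 1)" "p \<in> Vn n" "T_vanishes p"
  shows "T_vanishes (p * u)"
proof -
  have "qeq (n - 1) (T (p * u)) (T p * u)"
    by (rule T_mult_right[OF assms(1,2)])
  also have "qeq (n - 1) \<dots> (0 * u)"
    by (rule qeq_mult_right[OF assms(1,3)])
  finally show ?thesis
    by simp
qed

lemma Vn_gE_top [simp]: "gE n a \<in> Vn n"
  using n_pos by simp

lemma E_homogeneous_split:
  assumes "1 \<le> i" "i \<le> k"
  obtains a0 a1 where "a0 \<in> A0" "a1 \<in> A1" "qeq k (gE i a) (gE i a0 + gE i a1)"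
  using graded[of a] qeq_E_add[OF assms] by blast

(* The sandwich by A^(n) makes trace-nullity stable under multiplication by a^(n), which lies
   outside level n - 1 and therefore cannot be pulled out of T. *)
definition trace_null :: "('a, 'k) qfree \<Rightarrow> bool" where
  "trace_null p \<longleftrightarrow> p \<in> Vn n \<and> (\<forall>a b. T_vanishes (gE n a * p * gE n b))"

lemma trace_null_Vn: "trace_null p \<Longrightarrow> p \<in> Vn n"
  by (simp add: trace_null_def)

lemma trace_nullD: "trace_null p \<Longrightarrow> T_vanishes (gE n a * p * gE n b)"
  by (simp add: trace_null_def)

lemma trace_null_homogeneousI:
  assumes p: "p \<in> Vn n"
    and hom: "\<And>a b. a \<in> A0 \<union> A1 \<Longrightarrow> b \<in> A0 \<union> A1 \<Longrightarrow> T_vanishes (gE n a * p * gE n b)"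
  shows "trace_null p"
  unfolding trace_null_def
proof (intro conjI allI p)
  fix a b
  obtain a0 a1 where a: "a0 \<in> A0" "a1 \<in> A1" "gE n a \<approx> gE n a0 + gE n a1"
    using E_homogeneous_split n_pos by blast
  obtain b0 b1 where b: "b0 \<in> A0" "b1 \<in> A1" "gE n b \<approx> gE n b0 + gE n b1"
    using E_homogeneous_split n_pos by blast
  have "gE n a * p * gE n b \<approx> (gE n a0 + gE n a1) * p * (gE n b0 + gE n b1)"
    by (intro qeq_mult a(3) b(3) qeq_refl p)
  also have "\<dots> = (gE n a0 * p * gE n b0 + gE n a0 * p * gE n b1)
      + (gE n a1 * p * gE n b0 + gE n a1 * p * gE n b1)"
    by (simp add: algebra_simps)
  finally show "T_vanishes (gE n a * p * gE n b)"
    by (rule T_vanishes_qeq) (intro T_vanishes_add hom; use a b p n_pos in simp)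
qed

lemma trace_null_imp_T_vanishes:
  assumes "trace_null p"
  shows "T_vanishes p"
proof -
  have p: "p \<in> Vn n"
    using assms by (rule trace_null_Vn)
  have "gE n 1 * p * gE n 1 \<approx> 1 * p * 1"
    using n_pos p by (intro qeq_mult qeq_refl qeq_E_one) simp_all
  then have "p \<approx> gE n 1 * p * gE n 1"
    by (simp add: qeq_sym)
  then show ?thesis
    using trace_nullD[OF assms] by (rule T_vanishes_qeq)
qed

lemma trace_null_qeq:
  assumes "p \<approx> q" "trace_null q"
  shows "trace_null p"
  unfolding trace_null_def
proof (intro conjI allI)
  show "p \<in> Vn n"
    using assms(1) by (rule qeq_carrier)
  fix a b
  have "gE n a * p * gE n b \<approx> gE n a * q * gE n b"
    using assms(1) n_pos by (intro qeq_sandwich) simp_all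
  then show "T_vanishes (gE n a * p * gE n b)"
    using trace_nullD[OF assms(2)] by (rule T_vanishes_qeq)
qed

lemma trace_null_zero: "trace_null 0"
  using T_vanishes_zero by (simp add: trace_null_def)

lemma trace_null_add:
  assumes "trace_null p" "trace_null q"
  shows "trace_null (p + q)"
  unfolding trace_null_def
proof (intro conjI allI)
  show "p + q \<in> Vn n"
    using assms by (simp add: trace_null_Vn)
  fix a b
  have "T_vanishes (gE n a * p * gE n b + gE n a * q * gE n b)"
    using assms by (intro T_vanishes_add trace_nullD) (simp_all add: trace_null_Vn)
  then show "T_vanishes (gE n a * (p + q) * gE n b)"
    by (simp add: algebra_simps)
qed

lemma trace_null_sum: "(\<And>x. x \<in> J \<Longrightarrow> trace_null (f x)) \<Longrightarrow> trace_null (sum f J)"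
  by (induction J rule: infinite_finite_induct) (simp_all add: trace_null_zero trace_null_add)

lemma trace_null_mult_left_commuting:
  assumes u: "u \<in> Vn (n - 1)" "\<And>a. commute_in n (gE n a) u" and p: "trace_null p"
  shows "trace_null (u * p)"
  unfolding trace_null_def
proof (intro conjI allI)
  have "u \<in> Vn n" and pv: "p \<in> Vn n"
    using Vn_mono[OF u(1)] trace_null_Vn[OF p] by simp_all
  then show "u * p \<in> Vn n"
    by simp
  fix a b
  have "gE n a * u * (p * gE n b) \<approx> u * gE n a * (p * gE n b)"
    using u(2) pv n_pos unfolding commute_in_def by (intro qeq_mult_right) simp_all
  then have "gE n a * (u * p) * gE n b \<approx> u * (gE n a * p * gE n b)"
    by (simp add: mult.assoc)
  moreover have "T_vanishes (u * (gE n a * p * gE n b))"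
    using pv by (intro T_vanishes_mult_left[OF u(1)] trace_nullD[OF p]) simp
  ultimately show "T_vanishes (gE n a * (u * p) * gE n b)"
    by (rule T_vanishes_qeq)
qed

lemma trace_null_mult_right_commuting:
  assumes u: "u \<in> Vn (n - 1)" "\<And>b. commute_in n u (gE n b)" and p: "trace_null p"
  shows "trace_null (p * u)"
  unfolding trace_null_def
proof (intro conjI allI)
  have "u \<in> Vn n" and pv: "p \<in> Vn n"
    using Vn_mono[OF u(1)] trace_null_Vn[OF p] by simp_all
  then show "p * u \<in> Vn n"
    by simp
  fix a b
  have "gE n a * p * (u * gE n b) \<approx> gE n a * p * (gE n b * u)"
    using u(2) pv n_pos unfolding commute_in_def by (intro qeq_mult_left) simp_all
  then have "gE n a * (p * u) * gE n b \<approx> (gE n a * p * gE n b) * u"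
    by (simp add: mult.assoc)
  moreover have "T_vanishes ((gE n a * p * gE n b) * u)"
    using pv by (intro T_vanishes_mult_right[OF u(1)] trace_nullD[OF p]) simp
  ultimately show "T_vanishes (gE n a * (p * u) * gE n b)"
    by (rule T_vanishes_qeq)
qed

lemma trace_null_fscal: "trace_null p \<Longrightarrow> trace_null (fscal c * p)"
  by (rule trace_null_mult_left_commuting) (simp_all add: commute_in_fscal)

lemma trace_null_uminus: "trace_null p \<Longrightarrow> trace_null (- p)"
  using trace_null_fscal[of p "- 1"] by (simp add: fscal_uminus)

lemma trace_null_diff: "trace_null p \<Longrightarrow> trace_null q \<Longrightarrow> trace_null (p - q)"
  using trace_null_add[of p "- q"] trace_null_uminus[of q] by simp

lemma trace_null_E_top_left:
  assumes p: "trace_null p"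
  shows "trace_null (gE n c * p)"
  unfolding trace_null_def
proof (intro conjI allI)
  have pv: "p \<in> Vn n"
    using p by (rule trace_null_Vn)
  then show "gE n c * p \<in> Vn n"
    using n_pos by simp
  fix a b
  have "gE n a * gE n c * (p * gE n b) \<approx> gE n (a * c) * (p * gE n b)"
    using pv n_pos by (intro qeq_mult_right qeq_E_mult) simp_all
  then have "gE n a * (gE n c * p) * gE n b \<approx> gE n (a * c) * p * gE n b"
    by (simp add: mult.assoc)
  moreover have "T_vanishes (gE n (a * c) * p * gE n b)"
    by (rule trace_nullD[OF p])
  ultimately show "T_vanishes (gE n a * (gE n c * p) * gE n b)"
    by (rule T_vanishes_qeq)
qed

lemma trace_null_E_top_right:
  assumes p: "trace_null p"
  shows "trace_null (p * gE n c)"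
  unfolding trace_null_def
proof (intro conjI allI)
  have pv: "p \<in> Vn n"
    using p by (rule trace_null_Vn)
  then show "p * gE n c \<in> Vn n"
    using n_pos by simp
  fix a b
  have "(gE n a * p) * (gE n c * gE n b) \<approx> (gE n a * p) * gE n (c * b)"
    using pv n_pos by (intro qeq_mult_left qeq_E_mult) simp_all
  then have "gE n a * (p * gE n c) * gE n b \<approx> gE n a * p * gE n (c * b)"
    by (simp add: mult.assoc)
  moreover have "T_vanishes (gE n a * p * gE n (c * b))"
    by (rule trace_nullD[OF p])
  ultimately show "T_vanishes (gE n a * (p * gE n c) * gE n b)"
    by (rule T_vanishes_qeq)
qed

lemma trace_null_E_left_homogeneous:
  assumes j: "1 \<le> j" "j < n" and c: "c \<in> A0 \<union> A1" and p: "trace_null p"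
  shows "trace_null (gE j c * p)"
proof (rule trace_null_homogeneousI)
  have pv: "p \<in> Vn n"
    using p by (rule trace_null_Vn)
  then show "gE j c * p \<in> Vn n"
    using j by simp
  fix a b
  assume a: "a \<in> A0 \<union> A1"
  let ?u = "fscal (sgn_par A1 a c) * gE j c"
  have "gE n a * gE j c * (p * gE n b) \<approx> ?u * gE n a * (p * gE n b)"
    using pv j a c n_pos by (intro qeq_mult_right qeq_E_supercommute) simp_all
  then have "gE n a * (gE j c * p) * gE n b \<approx> ?u * (gE n a * p * gE n b)"
    by (simp add: mult.assoc)
  moreover have "T_vanishes (?u * (gE n a * p * gE n b))"
    using pv j by (intro T_vanishes_mult_left trace_nullD[OF p]) simp_all
  ultimately show "T_vanishes (gE n a * (gE j c * p) * gE n b)"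
    by (rule T_vanishes_qeq)
qed

lemma trace_null_E_right_homogeneous:
  assumes j: "1 \<le> j" "j < n" and c: "c \<in> A0 \<union> A1" and p: "trace_null p"
  shows "trace_null (p * gE j c)"
proof (rule trace_null_homogeneousI)
  have pv: "p \<in> Vn n"
    using p by (rule trace_null_Vn)
  then show "p * gE j c \<in> Vn n"
    using j by simp
  fix a b
  assume b: "b \<in> A0 \<union> A1"
  let ?u = "fscal (sgn_par A1 c b) * gE j c"
  have "(gE n a * p) * (gE j c * gE n b)
      \<approx> (gE n a * p) * (fscal (sgn_par A1 c b) * gE n b * gE j c)"
    using pv j b c n_pos by (intro qeq_mult_left qeq_E_supercommute) simp_all
  then have "gE n a * (p * gE j c) * gE n b \<approx> (gE n a * p * gE n b) * ?u"
    by (simp add: mult.assoc fscal_mult_left_commute fscal_commute)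
  moreover have "T_vanishes ((gE n a * p * gE n b) * ?u)"
    using pv j by (intro T_vanishes_mult_right trace_nullD[OF p]) simp_all
  ultimately show "T_vanishes (gE n a * (p * gE j c) * gE n b)"
    by (rule T_vanishes_qeq)
qed

lemma trace_null_E_left:
  assumes j: "1 \<le> j" "j < n" and p: "trace_null p"
  shows "trace_null (gE j c * p)"
proof -
  obtain c0 c1 where c: "c0 \<in> A0" "c1 \<in> A1" "gE j c \<approx> gE j c0 + gE j c1"
    using E_homogeneous_split j by (metis less_imp_le)
  have "gE j c * p \<approx> (gE j c0 + gE j c1) * p"
    using c(3) trace_null_Vn[OF p] by (rule qeq_mult_right[rotated])
  moreover have "trace_null ((gE j c0 + gE j c1) * p)"
    unfolding distrib_right using c j p
    by (intro trace_null_add trace_null_E_left_homogeneous) auto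
  ultimately show ?thesis
    by (rule trace_null_qeq)
qed

lemma trace_null_E_right:
  assumes j: "1 \<le> j" "j < n" and p: "trace_null p"
  shows "trace_null (p * gE j c)"
proof -
  obtain c0 c1 where c: "c0 \<in> A0" "c1 \<in> A1" "gE j c \<approx> gE j c0 + gE j c1"
    using E_homogeneous_split j by (metis less_imp_le)
  have "p * gE j c \<approx> p * (gE j c0 + gE j c1)"
    using c(3) trace_null_Vn[OF p] by (rule qeq_mult_left[rotated])
  moreover have "trace_null (p * (gE j c0 + gE j c1))"
    unfolding distrib_left using c j p
    by (intro trace_null_add trace_null_E_right_homogeneous) auto
  ultimately show ?thesis
    by (rule trace_null_qeq)
qed

lemma trace_null_X_power_left:
  "1 \<le> j \<Longrightarrow> j < n \<Longrightarrow> trace_null p \<Longrightarrow> trace_null (gX j ^ e * p)"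
  by (rule trace_null_mult_left_commuting)
    (simp_all add: commute_in_power_right commute_in_sym commute_in_X_E n_pos)

lemma trace_null_X_power_right:
  "1 \<le> j \<Longrightarrow> j < n \<Longrightarrow> trace_null p \<Longrightarrow> trace_null (p * gX j ^ e)"
  by (rule trace_null_mult_right_commuting)
    (simp_all add: commute_in_power_left commute_in_X_E n_pos)

lemma trace_null_S_left: "1 \<le> j \<Longrightarrow> Suc j < n \<Longrightarrow> trace_null p \<Longrightarrow> trace_null (gS j * p)"
  by (rule trace_null_mult_left_commuting) (simp_all add: commute_in_sym commute_in_S_E)

lemma trace_null_S_right: "1 \<le> j \<Longrightarrow> Suc j < n \<Longrightarrow> trace_null p \<Longrightarrow> trace_null (p * gS j)"
  by (rule trace_null_mult_right_commuting) (simp_all add: commute_in_S_E)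

lemma trace_null_S_last:
  assumes "2 \<le> n"
  shows "trace_null (gS (n - 1))"
proof (rule trace_null_homogeneousI)
  define i where "i = n - 1"
  have i: "n = Suc i" "1 \<le> i"
    using assms by (simp_all add: i_def)
  show "gS (n - 1) \<in> Vn n"
    using assms by simp
  fix a b
  assume a: "a \<in> A0 \<union> A1" and b: "b \<in> A0 \<union> A1"
  let ?c = "fscal (sgn_par A1 a b)"
  have "gE n a * gS i * gE n b \<approx> gS i * gE i a * gE n b"
    using qeq_sym[OF qeq_S_E_up[of i n a]] i by (intro qeq_mult_right) simp_all
  also have "gS i * gE i a * gE n b = gS i * (gE i a * gE n b)"
    by (simp add: mult.assoc)
  also have "\<dots> \<approx> gS i * (?c * gE n b * gE i a)"
    using i a b by (intro qeq_mult_left qeq_E_supercommute) simp_all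
  also have "\<dots> = ?c * (gS i * gE n b) * gE i a"
    by (simp add: mult.assoc fscal_mult_left_commute)
  also have "\<dots> \<approx> ?c * (gE i b * gS i) * gE i a"
    using qeq_S_E_down[of i n b] i by (intro qeq_sandwich) simp_all
  finally have "gE n a * gS i * gE n b \<approx> (?c * gE i b) * gS i * gE i a"
    by (simp add: mult.assoc)
  moreover have "T_vanishes ((?c * gE i b) * gS i * gE i a)"
    using T_S_last[OF assms] i by (intro T_vanishes_mult_right T_vanishes_mult_left) simp_all
  ultimately have "T_vanishes (gE n a * gS i * gE n b)"
    by (rule T_vanishes_qeq)
  then show "T_vanishes (gE n a * gS (n - 1) * gE n b)"
    by (simp add: i_def)
qed

lemma trace_null_X_top_power:
  assumes "0 < e" "e < l"
  shows "trace_null (gX n ^ e)"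
  unfolding trace_null_def
proof (intro conjI allI)
  show "gX n ^ e \<in> Vn n"
    using n_pos by simp
  fix a b
  have "commute_in n (gX n ^ e) (gE n b)"
    using n_pos by (intro commute_in_power_left commute_in_X_E) simp_all
  then have "gX n ^ e * gE n b \<approx> gE n b * gX n ^ e"
    by (simp add: commute_in_def)
  then have "gE n a * (gX n ^ e * gE n b) \<approx> (gE n a * gE n b) * gX n ^ e"
    by (simp add: qeq_mult_left mult.assoc)
  also have "\<dots> \<approx> gE n (a * b) * gX n ^ e"
    using n_pos by (intro qeq_mult_right qeq_E_mult) simp_all
  finally have "gE n a * gX n ^ e * gE n b \<approx> gE n (a * b) * gX n ^ e"
    by (simp add: mult.assoc)
  moreover have "T_vanishes (gE n (a * b) * gX n ^ e)"
    using T_E_X_power[of e "a * b"] assms by simp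
  ultimately show "T_vanishes (gE n a * gX n ^ e * gE n b)"
    by (rule T_vanishes_qeq)
qed

section \<open>Conjugation by \<open>\<sigma>\<^sub>n\<^sub>-\<^sub>1 \<cdots> \<sigma>\<^sub>m\<close>\<close>

(* conj_sig m is the map \<Phi>_m of the proof idea. *)
definition sig_desc :: "nat \<Rightarrow> ('a, 'k) qfree" where
  "sig_desc m = prod_list (map gS (rev [m..<n]))"

definition sig_asc :: "nat \<Rightarrow> ('a, 'k) qfree" where
  "sig_asc m = prod_list (map gS [m..<n])"

definition conj_sig :: "nat \<Rightarrow> ('a, 'k) qfree \<Rightarrow> ('a, 'k) qfree" where
  "conj_sig m p = sig_desc m * p * sig_asc m"

lemma sig_desc_step: "m < n \<Longrightarrow> sig_desc m = sig_desc (Suc m) * gS m"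
  by (simp add: sig_desc_def upt_conv_Cons)

lemma sig_asc_step: "m < n \<Longrightarrow> sig_asc m = gS m * sig_asc (Suc m)"
  by (simp add: sig_asc_def upt_conv_Cons)

lemma Vn_sig_desc [simp]: "1 \<le> m \<Longrightarrow> sig_desc m \<in> Vn n"
  unfolding sig_desc_def by (rule Vn_prod_list) auto

lemma Vn_sig_asc [simp]: "1 \<le> m \<Longrightarrow> sig_asc m \<in> Vn n"
  unfolding sig_asc_def by (rule Vn_prod_list) auto

lemma conj_sig_top [simp]: "conj_sig n p = p"
  by (simp add: conj_sig_def sig_desc_def sig_asc_def)

lemma conj_sig_step: "m < n \<Longrightarrow> conj_sig m p = conj_sig (Suc m) (gS m * p * gS m)"
  by (simp add: conj_sig_def sig_desc_step sig_asc_step mult.assoc)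

lemma conj_sig_add: "conj_sig m (p + q) = conj_sig m p + conj_sig m q"
  by (simp add: conj_sig_def algebra_simps)

lemma conj_sig_diff: "conj_sig m (p - q) = conj_sig m p - conj_sig m q"
  by (simp add: conj_sig_def algebra_simps)

lemma conj_sig_uminus: "conj_sig m (- p) = - conj_sig m p"
  by (simp add: conj_sig_def)

lemma conj_sig_sum: "conj_sig m (sum f J) = (\<Sum>x\<in>J. conj_sig m (f x))"
  by (simp add: conj_sig_def sum_distrib_left sum_distrib_right)

lemma conj_sig_fscal: "conj_sig m (fscal c * p) = fscal c * conj_sig m p"
  by (simp add: conj_sig_def mult.assoc fscal_mult_left_commute)

lemma Vn_conj_sig [simp]: "1 \<le> m \<Longrightarrow> p \<in> Vn n \<Longrightarrow> conj_sig m p \<in> Vn n"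
  by (simp add: conj_sig_def)

lemma conj_sig_cong: "1 \<le> m \<Longrightarrow> p \<approx> q \<Longrightarrow> conj_sig m p \<approx> conj_sig m q"
  unfolding conj_sig_def by (rule qeq_sandwich) simp_all

lemma conj_sig_pull:
  assumes "W \<in> Vn n" "sig_desc m * u \<approx> u' * sig_desc m" "v * sig_asc m \<approx> sig_asc m * v'"
  shows "conj_sig m (u * W * v) \<approx> u' * conj_sig m W * v'"
proof -
  have "conj_sig m (u * W * v) = (sig_desc m * u) * W * (v * sig_asc m)"
    by (simp add: conj_sig_def mult.assoc)
  also have "\<dots> \<approx> (u' * sig_desc m) * W * (sig_asc m * v')"
    by (rule qeq_mult[OF qeq_mult[OF assms(2) qeq_refl[OF assms(1)]] assms(3)])
  also have "\<dots> = u' * conj_sig m W * v'"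
    by (simp add: conj_sig_def mult.assoc)
  finally show ?thesis .
qed

lemma sig_desc_E_shift: "m \<le> n \<Longrightarrow> 1 \<le> m \<Longrightarrow> sig_desc m * gE m a \<approx> gE n a * sig_desc m"
proof (induction m rule: inc_induct)
  case base
  show ?case by (simp add: sig_desc_def qeq_refl)
next
  case (step m)
  have "sig_desc m * gE m a = sig_desc (Suc m) * (gS m * gE m a)"
    using step by (simp add: sig_desc_step mult.assoc)
  also have "\<dots> \<approx> sig_desc (Suc m) * (gE (Suc m) a * gS m)"
    using step by (intro qeq_mult_left qeq_S_E_up) simp_all
  also have "\<dots> = (sig_desc (Suc m) * gE (Suc m) a) * gS m"
    by (simp add: mult.assoc)
  also have "\<dots> \<approx> (gE n a * sig_desc (Suc m)) * gS m"
    using step by (intro qeq_mult_right step.IH) simp_all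
  also have "\<dots> = gE n a * sig_desc m"
    using step by (simp add: sig_desc_step mult.assoc)
  finally show ?case .
qed

lemma E_sig_asc_shift: "m \<le> n \<Longrightarrow> 1 \<le> m \<Longrightarrow> gE m a * sig_asc m \<approx> sig_asc m * gE n a"
proof (induction m rule: inc_induct)
  case base
  show ?case by (simp add: sig_asc_def qeq_refl)
next
  case (step m)
  have "gE m a * sig_asc m = (gE m a * gS m) * sig_asc (Suc m)"
    using step by (simp add: sig_asc_step mult.assoc)
  also have "\<dots> \<approx> (gS m * gE (Suc m) a) * sig_asc (Suc m)"
    using step by (intro qeq_mult_right qeq_sym[OF qeq_S_E_down]) simp_all
  also have "\<dots> = gS m * (gE (Suc m) a * sig_asc (Suc m))"
    by (simp add: mult.assoc)
  also have "\<dots> \<approx> gS m * (sig_asc (Suc m) * gE n a)"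
    using step by (intro qeq_mult_left step.IH) simp_all
  also have "\<dots> = sig_asc m * gE n a"
    using step by (simp add: sig_asc_step mult.assoc)
  finally show ?case .
qed

lemma conj_sig_E_left:
  assumes "1 \<le> m" "m < n" "W \<in> Vn n"
  shows "conj_sig (Suc m) (gE (Suc m) c * W) \<approx> gE n c * conj_sig (Suc m) W"
proof -
  have "conj_sig (Suc m) (gE (Suc m) c * W * 1) \<approx> gE n c * conj_sig (Suc m) W * 1"
    using assms by (intro conj_sig_pull sig_desc_E_shift) (simp_all add: qeq_refl)
  then show ?thesis
    by simp
qed

definition commutes_above :: "nat \<Rightarrow> ('a, 'k) qfree \<Rightarrow> bool" where
  "commutes_above m g \<longleftrightarrow> g \<in> Vn n \<and> (\<forall>j. m < j \<longrightarrow> j < n \<longrightarrow> commute_in n g (gS j))"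

lemma commutes_above_one: "commutes_above m 1"
  by (simp add: commutes_above_def commute_in_def qeq_refl)

lemma commutes_above_mult: "commutes_above m g \<Longrightarrow> commutes_above m h \<Longrightarrow> commutes_above m (g * h)"
  by (simp add: commutes_above_def commute_in_mult_left)

lemma commutes_above_E: "1 \<le> m \<Longrightarrow> m < n \<Longrightarrow> commutes_above m (gE m a)"
  by (simp add: commutes_above_def commute_in_sym commute_in_S_E)

lemma commutes_above_X_power: "1 \<le> m \<Longrightarrow> m < n \<Longrightarrow> commutes_above m (gX m ^ c)"
  by (simp add: commutes_above_def commute_in_power_left commute_in_sym commute_in_S_X)

lemma commutes_above_S: "1 \<le> m \<Longrightarrow> Suc m < n \<Longrightarrow> commutes_above (Suc m) (gS m)"
  by (simp add: commutes_above_def commute_in_S_S)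

lemma commutes_above_sig:
  assumes "commutes_above m g"
  shows "sig_desc (Suc m) * g \<approx> g * sig_desc (Suc m)" "g * sig_asc (Suc m) \<approx> sig_asc (Suc m) * g"
proof -
  have "commute_in n g (sig_desc (Suc m))" "commute_in n g (sig_asc (Suc m))"
    using assms unfolding commutes_above_def sig_desc_def sig_asc_def
    by (auto intro!: commute_in_prod_list_right)
  then show "sig_desc (Suc m) * g \<approx> g * sig_desc (Suc m)"
    and "g * sig_asc (Suc m) \<approx> sig_asc (Suc m) * g"
    unfolding commute_in_def by (simp_all add: qeq_sym)
qed

lemma conj_sig_pull_commuting:
  assumes "commutes_above m u" "commutes_above m v" "W \<in> Vn n"
  shows "conj_sig (Suc m) (u * W * v) \<approx> u * conj_sig (Suc m) W * v"
  using assms(3) commutes_above_sig(1)[OF assms(1)] commutes_above_sig(2)[OF assms(2)]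
  by (rule conj_sig_pull)

lemma conj_sig_pull_commuting_left:
  "commutes_above m u \<Longrightarrow> W \<in> Vn n \<Longrightarrow> conj_sig (Suc m) (u * W) \<approx> u * conj_sig (Suc m) W"
  using conj_sig_pull_commuting[OF _ commutes_above_one, of m u W] by simp

lemma trace_null_conj_S:
  assumes "1 \<le> m" "m < n"
  shows "trace_null (conj_sig (Suc m) (gS m))"
proof -
  have "m \<le> n - 1" using assms by simp
  then show ?thesis
  proof (induction m rule: inc_induct)
    case base
    have "trace_null (gS (n - 1))"
      using assms by (intro trace_null_S_last) simp
    then show ?case
      using assms by simp
  next
    case (step k)
    have k: "1 \<le> k" "Suc k < n"
      using step assms by simp_all
    have "conj_sig (Suc k) (gS k) = conj_sig (Suc (Suc k)) (gS (Suc k) * gS k * gS (Suc k))"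
      using k by (simp add: conj_sig_step)
    also have "\<dots> \<approx> conj_sig (Suc (Suc k)) (gS k * gS (Suc k) * gS k)"
      using k by (intro conj_sig_cong qeq_sym[OF qeq_S_braid]) simp_all
    also have "\<dots> \<approx> gS k * conj_sig (Suc (Suc k)) (gS (Suc k)) * gS k"
      using k by (intro conj_sig_pull_commuting commutes_above_S) simp_all
    finally show ?case
      using k step.IH by (elim trace_null_qeq) (intro trace_null_S_left trace_null_S_right)
  qed
qed

lemma trace_null_conj_qeq:
  "p \<approx> q \<Longrightarrow> trace_null (conj_sig (Suc m) q) \<Longrightarrow> trace_null (conj_sig (Suc m) p)"
  by (rule trace_null_qeq[OF conj_sig_cong]) simp_all

lemma trace_null_conj_E_left:
  assumes "1 \<le> m" "m < n" "W \<in> Vn n" "trace_null (conj_sig (Suc m) W)"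
  shows "trace_null (conj_sig (Suc m) (gE (Suc m) c * W))"
  using conj_sig_E_left[OF assms(1-3)] trace_null_E_top_left[OF assms(4)] by (rule trace_null_qeq)

section \<open>Trace-nullity of the conjugated polynomials\<close>

lemma trace_null_conj_one_minus_S_square:
  assumes m: "1 \<le> m" "m < n"
  shows "trace_null (conj_sig (Suc m) (1 - gS m * gS m))"
proof -
  have "1 - gS m * gS m \<approx> 1 - (fscal z * tau B dual m * gS m + 1)"
    using m by (intro qeq_diff qeq_refl qeq_S_square) simp_all
  then have eq: "1 - gS m * gS m \<approx> - (fscal z * (\<Sum>b\<in>B. gE (Suc m) b * (gE m (dual b) * gS m)))"
    by (simp add: tau_def sum_distrib_right mult.assoc)
  have "trace_null (conj_sig (Suc m) (gE m (dual b) * gS m))" for b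
  proof -
    have "conj_sig (Suc m) (gE m (dual b) * gS m) \<approx> gE m (dual b) * conj_sig (Suc m) (gS m)"
      using m by (intro conj_sig_pull_commuting_left commutes_above_E) simp_all
    moreover have "trace_null (gE m (dual b) * conj_sig (Suc m) (gS m))"
      using m by (intro trace_null_E_left trace_null_conj_S)
    ultimately show ?thesis
      by (rule trace_null_qeq)
  qed
  then have "trace_null (conj_sig (Suc m)
      (- (fscal z * (\<Sum>b\<in>B. gE (Suc m) b * (gE m (dual b) * gS m)))))"
    unfolding conj_sig_uminus conj_sig_fscal conj_sig_sum using m
    by (intro trace_null_uminus trace_null_fscal trace_null_sum trace_null_conj_E_left) simp_all
  then show ?thesis
    by (rule trace_null_conj_qeq[OF eq])
qed

lemma trace_null_conj_X_S_X_tau: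
  assumes m: "1 \<le> m" "m < n"
  shows "trace_null (conj_sig (Suc m) (gX m ^ d * gS m * gX m ^ c * tau B dual m))"
proof -
  let ?x = "gX m" and ?s = "gS m"
  have each:
    "trace_null (conj_sig (Suc m) (?x ^ d * ?s * ?x ^ c * (gE (Suc m) b * gE m (dual b))))" for b
  proof -
    let ?u = "?x ^ d * gE m b" and ?v = "?x ^ c * gE m (dual b)"
    have "commute_in n (?x ^ c) (gE (Suc m) b)"
      using m by (intro commute_in_power_left commute_in_X_E) simp_all
    have "?x ^ d * ?s * ?x ^ c * (gE (Suc m) b * gE m (dual b))
        = (?x ^ d * ?s) * (?x ^ c * gE (Suc m) b) * gE m (dual b)"
      by (simp add: mult.assoc)
    also have "\<dots> \<approx> (?x ^ d * ?s) * (gE (Suc m) b * ?x ^ c) * gE m (dual b)"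
      using \<open>commute_in n (?x ^ c) (gE (Suc m) b)\<close> m unfolding commute_in_def
      by (intro qeq_sandwich) simp_all
    also have "\<dots> = ?x ^ d * (?s * gE (Suc m) b) * ?v"
      by (simp add: mult.assoc)
    also have "\<dots> \<approx> ?x ^ d * (gE m b * ?s) * ?v"
      using m by (intro qeq_sandwich qeq_S_E_down) simp_all
    finally have eq: "?x ^ d * ?s * ?x ^ c * (gE (Suc m) b * gE m (dual b)) \<approx> ?u * ?s * ?v"
      by (simp add: mult.assoc)
    have "conj_sig (Suc m) (?u * ?s * ?v) \<approx> ?u * conj_sig (Suc m) ?s * ?v"
      using m
      by (intro conj_sig_pull_commuting commutes_above_mult commutes_above_X_power commutes_above_E)
        simp_all
    moreover have
      "trace_null (?x ^ d * (gE m b * ((conj_sig (Suc m) ?s * ?x ^ c) * gE m (dual b))))"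
      using m by (intro trace_null_X_power_left trace_null_E_left trace_null_E_right
          trace_null_X_power_right trace_null_conj_S)
    ultimately have "trace_null (conj_sig (Suc m) (?u * ?s * ?v))"
      by (simp add: trace_null_qeq mult.assoc)
    then show ?thesis
      by (rule trace_null_conj_qeq[OF eq])
  qed
  show ?thesis
    unfolding tau_def sum_distrib_left conj_sig_sum by (intro trace_null_sum each)
qed

lemma trace_null_conj_E_sandwich:
  assumes m: "1 \<le> m" "m < n" and Y: "Y \<in> Vn n" "trace_null (conj_sig (Suc m) Y)"
  shows "trace_null (conj_sig (Suc m) (gE (Suc m) a * (gE m b * Y * gE (Suc m) c) * gE m d))"
proof -
  have "conj_sig (Suc m) (gE (Suc m) a * (gE m b * Y * gE (Suc m) c) * gE m d)
      \<approx> gE n a * conj_sig (Suc m) (gE m b * Y * gE (Suc m) c) * gE m d"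
    using m Y by (intro conj_sig_pull sig_desc_E_shift commutes_above_sig commutes_above_E) simp_all
  also have "\<dots> \<approx> gE n a * (gE m b * conj_sig (Suc m) Y * gE n c) * gE m d"
    using m Y
    by (intro qeq_sandwich conj_sig_pull commutes_above_sig commutes_above_E E_sig_asc_shift)
      simp_all
  finally show ?thesis
    using trace_null_E_top_left[OF trace_null_E_left[OF m trace_null_E_right[OF m
        trace_null_E_top_right[OF Y(2)]]]]
    by (simp add: trace_null_qeq mult.assoc)
qed

lemma trace_null_conj_tau_sandwich:
  assumes m: "1 \<le> m" "m < n" and Y: "Y \<in> Vn n" "trace_null (conj_sig (Suc m) Y)"
  shows "trace_null (conj_sig (Suc m) (gX m ^ a * tau B dual m * Y * (gX m ^ c * tau B dual m)))"
proof -
  let ?t = "tau B dual m" and ?x = "gX m"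
  have "commute_in n (?x ^ c) ?t"
    using m by (intro commute_in_power_left commute_in_X_tau) simp_all
  then have eq: "?x ^ a * ?t * Y * (?x ^ c * ?t) \<approx> ?x ^ a * (?t * Y * ?t) * ?x ^ c"
    using m Y unfolding commute_in_def by (simp add: qeq_mult_left mult.assoc)
  have "?t * Y * ?t
      = (\<Sum>b\<in>B. \<Sum>b'\<in>B. gE (Suc m) b * (gE m (dual b) * Y * gE (Suc m) b') * gE m (dual b'))"
    by (simp add: tau_def sum_distrib_left sum_distrib_right mult.assoc) (rule sum.swap)
  then have "trace_null (conj_sig (Suc m) (?t * Y * ?t))"
    using m Y by (simp add: conj_sig_sum trace_null_sum trace_null_conj_E_sandwich)
  then have "trace_null (?x ^ a * conj_sig (Suc m) (?t * Y * ?t) * ?x ^ c)"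
    using m by (intro trace_null_X_power_left trace_null_X_power_right)
  moreover have "conj_sig (Suc m) (?x ^ a * (?t * Y * ?t) * ?x ^ c)
      \<approx> ?x ^ a * conj_sig (Suc m) (?t * Y * ?t) * ?x ^ c"
    using m Y by (intro conj_sig_pull_commuting commutes_above_X_power) simp_all
  ultimately have "trace_null (conj_sig (Suc m) (?x ^ a * (?t * Y * ?t) * ?x ^ c))"
    by (rule trace_null_qeq[rotated])
  then show ?thesis
    by (rule trace_null_conj_qeq[OF eq])
qed

lemma trace_null_conj_S_X_tau_X:
  assumes m: "1 \<le> m" "m < n"
    and hyp: "\<And>e. 1 \<le> e \<Longrightarrow> e \<le> d \<Longrightarrow> trace_null (conj_sig (Suc m) (gX (Suc m) ^ e))"
  shows "trace_null (conj_sig (Suc m) (gS m * gX m ^ c * tau B dual m * gX (Suc m) ^ d))"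
proof -
  let ?s = "gS m" and ?x = "gX m" and ?y = "gX (Suc m)" and ?t = "tau B dual m"
  have "commute_in n (?x ^ c) (?y ^ d)" "commute_in n ?t (?y ^ d)"
    using m by (intro commute_in_power_left commute_in_power_right commute_in_X_X
        commute_in_sym[OF commute_in_X_tau]; simp)+
  then have comm: "commute_in n (?x ^ c * ?t) (?y ^ d)"
    using m by (intro commute_in_mult_left) simp_all
  have "?s * ?x ^ c * ?t * ?y ^ d = ?s * (?x ^ c * ?t * ?y ^ d)"
    by (simp add: mult.assoc)
  also have "\<dots> \<approx> ?s * (?y ^ d * (?x ^ c * ?t))"
    using comm m unfolding commute_in_def by (intro qeq_mult_left) simp_all
  also have "\<dots> = (?s * ?y ^ d) * (?x ^ c * ?t)"
    by (simp add: mult.assoc)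
  also have "\<dots> \<approx> (?x ^ d * ?s + fscal z * (\<Sum>a<d. ?x ^ a * ?t * ?y ^ (d - a))) * (?x ^ c * ?t)"
    using m by (intro qeq_mult_right S_X_succ_power) simp_all
  also have "\<dots> = ?x ^ d * ?s * ?x ^ c * ?t
      + fscal z * (\<Sum>a<d. ?x ^ a * ?t * ?y ^ (d - a) * (?x ^ c * ?t))"
    by (simp add: algebra_simps sum_distrib_right)
  finally have eq: "?s * ?x ^ c * ?t * ?y ^ d
      \<approx> ?x ^ d * ?s * ?x ^ c * ?t
        + fscal z * (\<Sum>a<d. ?x ^ a * ?t * ?y ^ (d - a) * (?x ^ c * ?t))" .
  have "trace_null (conj_sig (Suc m) (?x ^ d * ?s * ?x ^ c * ?t
      + fscal z * (\<Sum>a<d. ?x ^ a * ?t * ?y ^ (d - a) * (?x ^ c * ?t))))"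
    unfolding conj_sig_add conj_sig_fscal conj_sig_sum
    using m hyp by (intro trace_null_add trace_null_fscal trace_null_sum trace_null_conj_X_S_X_tau
        trace_null_conj_tau_sandwich) auto
  then show ?thesis
    by (rule trace_null_conj_qeq[OF eq])
qed

lemma trace_null_conj_X_power_defect_Suc:
  assumes m: "1 \<le> m" "m < n"
    and hyp: "\<And>e. 1 \<le> e \<Longrightarrow> e \<le> d \<Longrightarrow> trace_null (conj_sig (Suc m) (gX (Suc m) ^ e))"
  shows "trace_null (conj_sig (Suc m) (gX (Suc m) ^ Suc d - gS m * gX m ^ Suc d * gS m))"
proof -
  let ?S = "\<Sum>a<d. gS m * gX m ^ Suc a * tau B dual m * gX (Suc m) ^ (d - a)"
  have "gX (Suc m) ^ Suc d - gS m * gX m ^ Suc d * gS m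
      \<approx> gS m * gX m ^ Suc d * gS m + fscal z * ?S - gS m * gX m ^ Suc d * gS m"
    using m by (intro qeq_diff X_succ_power qeq_refl) simp_all
  then have eq: "gX (Suc m) ^ Suc d - gS m * gX m ^ Suc d * gS m \<approx> fscal z * ?S"
    by simp
  have "trace_null (conj_sig (Suc m) (fscal z * ?S))"
    unfolding conj_sig_fscal conj_sig_sum
    using m hyp by (intro trace_null_fscal trace_null_sum trace_null_conj_S_X_tau_X) auto
  then show ?thesis
    by (rule trace_null_conj_qeq[OF eq])
qed

lemma trace_null_conj_X_power:
  "0 < e \<Longrightarrow> e < l \<Longrightarrow> j \<le> n \<Longrightarrow> 1 \<le> j \<Longrightarrow> trace_null (conj_sig j (gX j ^ e))"
proof (induction e arbitrary: j rule: less_induct)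
  case (less e)
  obtain d where d: "e = Suc d"
    using less.prems(1) by (cases e) auto
  show ?case
    using less.prems(3,4)
  proof (induction j rule: inc_induct)
    case base
    show ?case
      using trace_null_X_top_power less.prems by simp
  next
    case (step j)
    have j: "1 \<le> j" "j < n"
      using step by auto
    have "conj_sig j (gX j ^ e) = conj_sig (Suc j) (gX (Suc j) ^ e)
        - conj_sig (Suc j) (gX (Suc j) ^ Suc d - gS j * gX j ^ Suc d * gS j)"
      using j by (simp add: conj_sig_step conj_sig_diff d)
    moreover have "trace_null (conj_sig (Suc j) (gX (Suc j) ^ Suc d - gS j * gX j ^ Suc d * gS j))"
      using j less.prems d by (intro trace_null_conj_X_power_defect_Suc less.IH) auto
    ultimately show ?case
      using step.IH j by (simp add: trace_null_diff)
  qed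
qed

lemma trace_null_conj_X_power_defect:
  assumes m: "1 \<le> m" "m < n" and k: "k \<le> l"
  shows "trace_null (conj_sig (Suc m) (gX (Suc m) ^ k - gS m * gX m ^ k * gS m))"
proof (cases k)
  case 0
  then show ?thesis
    using trace_null_conj_one_minus_S_square[OF m] by simp
next
  case (Suc d)
  show ?thesis
    unfolding Suc using m k Suc
    by (intro trace_null_conj_X_power_defect_Suc trace_null_conj_X_power) auto
qed

lemma trace_null_conj_fpoly:
  assumes "1 \<le> m" "m \<le> n"
  shows "trace_null (conj_sig m (fpoly fc l m))"
  using assms
proof (induction m rule: nat_induct_at_least)
  case base
  have "fpoly fc l 1 \<in> qideal n"
    unfolding qwa_ideal_def using n_pos by (intro ideal_gen.gen) simp
  then have "conj_sig 1 (fpoly fc l 1) \<in> qideal n"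
    unfolding conj_sig_def by (intro qideal_mult_left qideal_mult_right) simp_all
  then have "conj_sig 1 (fpoly fc l 1) \<approx> 0"
    using n_pos by (intro qeq_zeroI) simp_all
  then show ?case
    using trace_null_zero by (rule trace_null_qeq)
next
  case (Suc m)
  have m: "1 \<le> m" "m < n"
    using Suc by simp_all
  have "conj_sig (Suc m) (fpoly fc l (Suc m)) = conj_sig m (fpoly fc l m)
      + conj_sig (Suc m) (fpoly fc l (Suc m) - gS m * fpoly fc l m * gS m)"
    using m by (simp add: conj_sig_step conj_sig_diff)
  moreover have "trace_null (conj_sig (Suc m) (\<Sum>j\<le>l. gE (Suc m) (fc j)
      * (gX (Suc m) ^ (l - j) - gS m * gX m ^ (l - j) * gS m)))"
    unfolding conj_sig_sum using m
    by (intro trace_null_sum trace_null_conj_E_left trace_null_conj_X_power_defect) simp_all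
  then have "trace_null (conj_sig (Suc m) (fpoly fc l (Suc m) - gS m * fpoly fc l m * gS m))"
    by (rule trace_null_conj_qeq[OF fpoly_conj_defect[OF m]])
  ultimately show ?case
    using Suc.IH m by (simp add: trace_null_add)
qed

end

theorem lemma6p1:
  fixes sc :: "'k::comm_ring_1 \<Rightarrow> 'a::ring_1 \<Rightarrow> 'a"
    and A0 A1 B :: "'a set" and tr :: "'a \<Rightarrow> 'k" and dual :: "'a \<Rightarrow> 'a"
    and z t :: 'k and fc :: "nat \<Rightarrow> 'a" and l n :: nat
    and T :: "('a, 'k) qfree \<Rightarrow> ('a, 'k) qfree"
  assumes A: "sym_frob_superalg sc A0 A1 tr B dual"
    and z: "z dvd 1" and t: "t dvd 1"
    and fcent: "\<forall>j\<le>l. even_supercentral A0 (fc j)"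
    and f0: "fc 0 = 1" and fl: "fc l = sc (t ^ 2) 1"
    and n: "1 \<le> n"
    and T: "is_qwa_trace sc A0 A1 tr B dual z fc l n T"
  shows "qwa_eq sc A0 A1 B dual z fc l (n - 1) (T (fpoly fc l n)) 0"
proof -
  interpret qwa_trace sc A0 A1 B dual z fc l tr n T
  proof
    show "\<exists>a0\<in>A0. \<exists>a1\<in>A1. a = a0 + a1" for a
      using A unfolding sym_frob_superalg_def by (elim conjE) blast
  qed (fact n T)+
  show ?thesis
    using trace_null_imp_T_vanishes[OF trace_null_conj_fpoly[of n]] n by simp
qed

end
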